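(* Assume $n = 3$ bidders, $k = 2$ items, values i.i.d. on $[0,\bar v]$ with CDF $F$ and density $f>0$, and let $A$ be the efficient allocation rule. Let $\pi$ be any (non-negative) payment rule implementing $A$ that is ex-post individually rational. Then there exist measurable functions $P_1, P_2$ on $\mathcal T = \{(y_1,y_2) : \bar v \ge y_1 \ge y_2 \ge 0\}$ such that the payment rule $P$ in which the highest-value bidder pays $P_1(v_{(1)},v_{(2)})$, the second-highest-value bidder pays $P_2(v_{(1)},v_{(2)})$ and the lowest-value bidder pays $0$ (payments independent of bidder identities and of $v_{(3)}$) is non-negative, ex-post individually rational, satisfies $\mathbb E[P_i(\bm v)\mid v_i] = z(v_i)$ for all $i, v_i$, and satisfies $\mathbb E[g(\sum_i P_i(\bm v))] \le \mathbb E[g(\sum_i \pi_i(\bm v))]$ for every convex $g : \mathbb R \to \mathbb R$ (for which the expectations exist); in particular the revenue variance of $P$ is at most that of $\pi$.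
   Context: Here $v_{(1)} \ge v_{(2)} \ge v_{(3)}$ are the order statistics of $\bm v$. The efficient allocation rule gives one item to each of the $k$ bidders with the highest values (ties broken by any fixed rule). For an allocation rule $A$, $x(v) = \mathbb E[A_i(\bm v)\mid v_i = v]$ and $z(v) = v x(v) - \int_0^v x(u)\,du$. A payment rule is a measurable map $P : [0,\bar v]^n \to [0,\infty)^n$; it implements $A$ if $(A,P)$ is Bayesian incentive compatible and $\mathbb E[P_i(\bm v)\mid v_i] = z(v_i)$ for all $i, v_i$. It is ex-post individually rational if $v_iA_i(\bm v) - P_i(\bm v) \ge 0$ for all $i$ and $\bm v$. *)

theory Defs
  imports "HOL-Probability.Probability"
begin

text \<open>Setting: n = 3 bidders indexed by 0,1,2; k = 2 items.
  A value profile is a function nat => real (only the coordinates 0,1,2 matter).\<close>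

definition bidders :: "nat set" where "bidders = {..<3}"

definition val_dist :: "(real \<Rightarrow> real) \<Rightarrow> real measure" where
  "val_dist f = density lborel (\<lambda>x. ennreal (f x))"

definition prof_measure :: "(real \<Rightarrow> real) \<Rightarrow> (nat \<Rightarrow> real) measure" where
  "prof_measure f = PiM bidders (\<lambda>_. val_dist f)"

definition box :: "real \<Rightarrow> (nat \<Rightarrow> real) set" where
  "box vbar = {v. \<forall>i\<in>bidders. v i \<in> {0..vbar}}"

text \<open>Rank of bidder i in profile v (0 = highest), ties broken by the fixed rule
  "smaller index ranks higher".\<close>
definition rank :: "(nat \<Rightarrow> real) \<Rightarrow> nat \<Rightarrow> nat" where
  "rank v i = card {j\<in>bidders. v j > v i \<or> (v j = v i \<and> j < i)}"

text \<open>Order statistics: ostat v 0 = v_(1), ostat v 1 = v_(2), ostat v 2 = v_(3).\<close>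
definition ostat :: "(nat \<Rightarrow> real) \<Rightarrow> nat \<Rightarrow> real" where
  "ostat v k = rev (sort (map v [0..<3])) ! k"

definition eff_alloc :: "nat \<Rightarrow> (nat \<Rightarrow> real) \<Rightarrow> real" where
  "eff_alloc i v = (if rank v i < 2 then 1 else 0)"

text \<open>Interim (conditional on v_i = w) expectation of a function Q i of the profile,
  for independent values: integrate over the other bidders' values.\<close>
definition interim :: "(real \<Rightarrow> real) \<Rightarrow> (nat \<Rightarrow> (nat \<Rightarrow> real) \<Rightarrow> real) \<Rightarrow> nat \<Rightarrow> real \<Rightarrow> real" where
  "interim f Q i w = (\<integral>v. Q i (v(i := w)) \<partial>prof_measure f)"

definition xfun :: "(real \<Rightarrow> real) \<Rightarrow> (nat \<Rightarrow> (nat \<Rightarrow> real) \<Rightarrow> real) \<Rightarrow> nat \<Rightarrow> real \<Rightarrow> real" where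
  "xfun f A i w = interim f A i w"

definition zfun :: "(real \<Rightarrow> real) \<Rightarrow> (nat \<Rightarrow> (nat \<Rightarrow> real) \<Rightarrow> real) \<Rightarrow> nat \<Rightarrow> real \<Rightarrow> real" where
  "zfun f A i w = w * xfun f A i w - (LBINT u:{0..w}. xfun f A i u)"

definition payment_rule :: "(real \<Rightarrow> real) \<Rightarrow> real \<Rightarrow> (nat \<Rightarrow> (nat \<Rightarrow> real) \<Rightarrow> real) \<Rightarrow> bool" where
  "payment_rule f vbar P \<longleftrightarrow>
     (\<forall>i\<in>bidders. P i \<in> borel_measurable (prof_measure f)) \<and>
     (\<forall>i\<in>bidders. \<forall>v\<in>box vbar. P i v \<ge> 0)"

definition BIC :: "(real \<Rightarrow> real) \<Rightarrow> real \<Rightarrow> (nat \<Rightarrow> (nat \<Rightarrow> real) \<Rightarrow> real)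
    \<Rightarrow> (nat \<Rightarrow> (nat \<Rightarrow> real) \<Rightarrow> real) \<Rightarrow> bool" where
  "BIC f vbar A P \<longleftrightarrow>
     (\<forall>i\<in>bidders. \<forall>w\<in>{0..vbar}. \<forall>w'\<in>{0..vbar}.
        w * interim f A i w - interim f P i w \<ge> w * interim f A i w' - interim f P i w')"

definition implements :: "(real \<Rightarrow> real) \<Rightarrow> real \<Rightarrow> (nat \<Rightarrow> (nat \<Rightarrow> real) \<Rightarrow> real)
    \<Rightarrow> (nat \<Rightarrow> (nat \<Rightarrow> real) \<Rightarrow> real) \<Rightarrow> bool" where
  "implements f vbar A P \<longleftrightarrow> BIC f vbar A P \<and>
     (\<forall>i\<in>bidders. \<forall>w\<in>{0..vbar}. interim f P i w = zfun f A i w)"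

definition ex_post_IR :: "real \<Rightarrow> (nat \<Rightarrow> (nat \<Rightarrow> real) \<Rightarrow> real)
    \<Rightarrow> (nat \<Rightarrow> (nat \<Rightarrow> real) \<Rightarrow> real) \<Rightarrow> bool" where
  "ex_post_IR vbar A P \<longleftrightarrow> (\<forall>i\<in>bidders. \<forall>v\<in>box vbar. v i * A i v - P i v \<ge> 0)"

definition rank_pay :: "(real \<Rightarrow> real \<Rightarrow> real) \<Rightarrow> (real \<Rightarrow> real \<Rightarrow> real)
    \<Rightarrow> nat \<Rightarrow> (nat \<Rightarrow> real) \<Rightarrow> real" where
  "rank_pay P1 P2 i v =
     (if rank v i = 0 then P1 (ostat v 0) (ostat v 1)
      else if rank v i = 1 then P2 (ostat v 0) (ostat v 1) else 0)"

definition tri :: "real \<Rightarrow> (real \<times> real) set" where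
  "tri vbar = {(y1, y2). vbar \<ge> y1 \<and> y1 \<ge> y2 \<and> y2 \<ge> 0}"

end

theory Submission
  imports Defs
begin

text \<open>Write \<open>a > b\<close> for the two highest values. Let \<open>P\<^sub>m(a, b)\<close> be the expected payment
  that \<open>\<pi>\<close> charges the bidder of rank \<open>m\<close>, conditionally on the two highest values being
  \<open>a\<close> and \<open>b\<close> and averaged over the six ways of assigning the ranks to the bidders. Ex-post IR
  of \<open>\<pi>\<close> means the lowest bidder pays nothing and the others pay at most their values, and
  these bounds survive the averaging. Since the values are i.i.d., each bidder's interim payment
  under \<open>P\<close> is the average over all bidders of their interim payments under \<open>\<pi>\<close>, and these all
  equal \<open>z\<close>. Finally the revenue of \<open>P\<close> is the conditional expectation of the revenue of
  \<open>\<pi>\<close> given the two highest values, so Jensen's inequality yields the convex order, and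
  \<open>g(x) = (x - c)\<^sup>2\<close> yields the variance comparison.\<close>

section \<open>Permutations, ranks and order statistics of three bidders\<close>

definition perm3 :: "nat \<Rightarrow> nat \<Rightarrow> nat" where
  "perm3 k i = [[0,1,2],[0,2,1],[1,0,2],[1,2,0],[2,0,1],[2,1,0::nat]] ! k ! i"

definition perm3_inv :: "nat \<Rightarrow> nat \<Rightarrow> nat" where
  "perm3_inv k i = [[0,1,2],[0,2,1],[1,0,2],[2,0,1],[1,2,0],[2,1,0::nat]] ! k ! i"

lemma less_6_cases: "k < (6::nat) \<Longrightarrow> k = 0 \<or> k = 1 \<or> k = 2 \<or> k = 3 \<or> k = 4 \<or> k = 5"
  by arith

lemma less_3_cases: "i < (3::nat) \<Longrightarrow> i = 0 \<or> i = 1 \<or> i = 2"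
  by arith

lemma perm3_less: "k < 6 \<Longrightarrow> i < 3 \<Longrightarrow> perm3 k i < 3"
  by (drule less_6_cases, drule less_3_cases) (auto simp: perm3_def)

lemma perm3_inv_less: "k < 6 \<Longrightarrow> i < 3 \<Longrightarrow> perm3_inv k i < 3"
  by (drule less_6_cases, drule less_3_cases) (auto simp: perm3_inv_def)

lemma perm3_inv_perm3: "k < 6 \<Longrightarrow> i < 3 \<Longrightarrow> perm3_inv k (perm3 k i) = i"
  by (drule less_6_cases, drule less_3_cases) (auto simp: perm3_inv_def perm3_def)

lemma perm3_perm3_inv: "k < 6 \<Longrightarrow> i < 3 \<Longrightarrow> perm3 k (perm3_inv k i) = i"
  by (drule less_6_cases, drule less_3_cases) (auto simp: perm3_inv_def perm3_def)

lemma perm3_eq_iff: "k < 6 \<Longrightarrow> i < 3 \<Longrightarrow> j < 3 \<Longrightarrow> perm3 k i = perm3 k j \<longleftrightarrow> i = j"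
  by (metis perm3_inv_perm3)

lemma sum_lessThan_3: "(\<Sum>i<3::nat. h i) = h 0 + h 1 + h 2"
  by (simp add: numeral_eq_Suc)

lemma sum_lessThan_6: "(\<Sum>k<6::nat. h k) = h 0 + h 1 + h 2 + h 3 + h 4 + h 5"
  by (simp add: numeral_eq_Suc)

lemma sum_perm3_reindex:
  fixes h :: "nat \<Rightarrow> nat \<Rightarrow> 'a::comm_monoid_add"
  shows "k < 6 \<Longrightarrow> (\<Sum>i<3. h i (perm3 k i)) = (\<Sum>m<3. h (perm3_inv k m) m)"
  by (drule less_6_cases) (auto simp: sum_lessThan_3 perm3_def perm3_inv_def ac_simps)

lemma sum_perm3_fixed_bidder:
  fixes H :: "nat \<Rightarrow> 'a::comm_monoid_add"
  shows "j < 3 \<Longrightarrow> (\<Sum>k<6. H (perm3 k j)) = (\<Sum>m<3. H m) + (\<Sum>m<3. H m)"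
  by (drule less_3_cases) (auto simp: sum_lessThan_6 sum_lessThan_3 perm3_def ac_simps)

definition desc_ind :: "(nat \<Rightarrow> real) \<Rightarrow> real" where
  "desc_ind y = of_bool (y 1 < y 0 \<and> y 2 < y 1)"

definition permute_profile :: "nat \<Rightarrow> (nat \<Rightarrow> real) \<Rightarrow> nat \<Rightarrow> real" where
  "permute_profile k v = (\<lambda>i\<in>{..<3}. v (perm3 k i))"

definition profile3 :: "real \<Rightarrow> real \<Rightarrow> real \<Rightarrow> nat \<Rightarrow> real" where
  "profile3 a b t = (\<lambda>i\<in>{..<3}. if i = 0 then a else if i = 1 then b else t)"

lemma profile3_apply [simp]:
  "profile3 a b t 0 = a" "profile3 a b t 1 = b" "profile3 a b t (Suc 0) = b" "profile3 a b t 2 = t"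
  by (simp_all add: profile3_def)

lemma desc_ind_cases: "desc_ind y = 0 \<or> desc_ind y = 1"
  by (simp add: desc_ind_def)

lemma desc_ind_nonzero_iff: "desc_ind y \<noteq> 0 \<longleftrightarrow> y 1 < y 0 \<and> y 2 < y 1"
  by (simp add: desc_ind_def)

lemma abs_desc_ind_mult_le: "\<bar>desc_ind y * x\<bar> \<le> \<bar>x\<bar>"
  using desc_ind_cases[of y] by auto

lemma desc_ind_profile3: "desc_ind (profile3 a b t) = of_bool (b < a) * indicator {..<b} t"
  by (simp add: desc_ind_def indicator_def profile3_def)

lemma sum_desc_ind_perm3_inv:
  "y 0 \<noteq> y 1 \<Longrightarrow> y 0 \<noteq> y 2 \<Longrightarrow> y 1 \<noteq> y 2 \<Longrightarrow> (\<Sum>k<6. desc_ind (\<lambda>c. y (perm3_inv k c))) = 1"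
  unfolding sum_lessThan_6 desc_ind_def perm3_inv_def
  by (cases "y 0 < y 1"; cases "y 1 < y 2"; cases "y 0 < y 2") simp_all

lemma permute_profile_apply: "i < 3 \<Longrightarrow> permute_profile k y i = y (perm3 k i)"
  by (simp add: permute_profile_def)

lemma permute_profile_perm3_inv: "k < 6 \<Longrightarrow> i < 3 \<Longrightarrow> permute_profile k y (perm3_inv k i) = y i"
  by (simp add: permute_profile_def perm3_inv_less perm3_perm3_inv)

lemma permute_profile_fun_upd:
  "k < 6 \<Longrightarrow> j < 3 \<Longrightarrow> (permute_profile k v)(j := w) = permute_profile k (v(perm3 k j := w))"
  by (auto simp: permute_profile_def fun_eq_iff perm3_eq_iff perm3_less)

lemma desc_ind_permute_perm3_inv: "k < 6 \<Longrightarrow> desc_ind (\<lambda>c. permute_profile k y (perm3_inv k c)) = desc_ind y"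
  by (simp add: desc_ind_def permute_profile_perm3_inv)

lemma rank_explicit: "rank v i = (if v i < v 0 \<or> (v 0 = v i \<and> 0 < i) then 1 else 0)
   + (if v i < v 1 \<or> (v 1 = v i \<and> 1 < i) then 1 else 0)
   + (if v i < v 2 \<or> (v 2 = v i \<and> 2 < i) then 1 else 0)"
  unfolding rank_def bidders_def
  by (subst card_eq_sum, subst sum.inter_filter) (simp_all add: sum_lessThan_3)

lemma ostat_0: "ostat v 0 = max (max (v 0) (v 1)) (v 2)"
  and ostat_1: "ostat v 1 = max (min (v 0) (v 1)) (min (max (v 0) (v 1)) (v 2))"
  unfolding ostat_def
  by (cases "v 0 \<le> v 1"; cases "v 1 \<le> v 2"; cases "v 0 \<le> v 2";
      simp add: upt_rec max_def min_def numeral_2_eq_2)+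

lemma rank_permute_profile:
  assumes "y 1 < y 0" "y 2 < y 1" "k < 6" "j < 3"
  shows "rank (permute_profile k y) j = perm3 k j"
  using less_6_cases[OF assms(3)] less_3_cases[OF assms(4)] assms(1,2)
  by (elim disjE) (simp_all add: rank_explicit permute_profile_apply perm3_def)

lemma ostat_permute_profile:
  assumes "y 1 < y 0" "y 2 < y 1" "k < 6"
  shows "ostat (permute_profile k y) 0 = y 0 \<and> ostat (permute_profile k y) 1 = y 1"
proof -
  have "\<not> y 0 \<le> y 1" "\<not> y 0 \<le> y 2" "\<not> y 1 \<le> y 2" "y 2 \<le> y 0" "y 2 \<le> y 1" "y 1 \<le> y 0"
    using assms(1,2) by auto
  with less_6_cases[OF assms(3)] show ?thesis unfolding ostat_0 ostat_1
    by (elim disjE) (simp_all add: permute_profile_apply perm3_def max_def min_def)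
qed

lemma rank_ostat:
  assumes "i < 3"
  shows "(rank v i = 0 \<longrightarrow> v i = ostat v 0) \<and> (rank v i = 1 \<longrightarrow> v i = ostat v 1)"
  using less_3_cases[OF assms] unfolding ostat_0 ostat_1 rank_explicit
  by (elim disjE; cases "v 0 < v 1"; cases "v 1 < v 2"; cases "v 0 < v 2";
      cases "v 0 = v 1"; cases "v 1 = v 2"; cases "v 0 = v 2") (simp_all add: max_def min_def)

lemma rank_pay_permute_profile:
  "k < 6 \<Longrightarrow> i < 3 \<Longrightarrow> desc_ind y * rank_pay Q1 Q2 i (permute_profile k y)
     = desc_ind y * (if perm3 k i = 0 then Q1 (y 0) (y 1) else if perm3 k i = 1 then Q2 (y 0) (y 1) else 0)"
  using rank_permute_profile[of y k i] ostat_permute_profile[of y k]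
  by (cases "desc_ind y = 0") (auto simp: rank_pay_def desc_ind_nonzero_iff)

lemma eff_alloc_permute_profile:
  "k < 6 \<Longrightarrow> i < 3 \<Longrightarrow> desc_ind y * eff_alloc i (permute_profile k y) = desc_ind y * of_bool (perm3 k i < 2)"
  using rank_permute_profile[of y k i]
  by (cases "desc_ind y = 0") (auto simp: eff_alloc_def desc_ind_nonzero_iff)

section \<open>Measure-theoretic preliminaries\<close>

lemma borel_measurable_uncurry_comp:
  fixes Q :: "real \<Rightarrow> real \<Rightarrow> real"
  assumes Q: "(\<lambda>z. Q (fst z) (snd z)) \<in> borel_measurable borel"
    and a: "a \<in> borel_measurable N" and b: "b \<in> borel_measurable N"
  shows "(\<lambda>x. Q (a x) (b x)) \<in> borel_measurable N"
proof -
  have "(\<lambda>x. (a x, b x)) \<in> measurable N borel"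
    using measurable_Pair[OF a b] by (simp add: borel_prod)
  from measurable_comp[OF this Q] show ?thesis by (simp add: comp_def)
qed

lemma real_rank_explicit: "real (rank v i) = (if v i < v 0 \<or> (v 0 = v i \<and> 0 < i) then 1 else 0)
   + (if v i < v 1 \<or> (v 1 = v i \<and> 1 < i) then 1 else 0)
   + (if v i < v 2 \<or> (v 2 = v i \<and> 2 < i) then 1 else 0)"
proof -
  have "rank v i = of_bool (v i < v 0 \<or> (v 0 = v i \<and> 0 < i)) + of_bool (v i < v 1 \<or> (v 1 = v i \<and> 1 < i))
      + of_bool (v i < v 2 \<or> (v 2 = v i \<and> 2 < i))"
    by (simp only: rank_explicit of_bool_def)
  then show ?thesis by (simp only: of_nat_add of_nat_of_bool) (simp only: of_bool_def)
qed

context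
  fixes g :: "'a \<Rightarrow> nat \<Rightarrow> real" and N :: "'a measure"
  assumes g_measurable: "\<And>c. c < 3 \<Longrightarrow> (\<lambda>x. g x c) \<in> borel_measurable N"
begin

lemma desc_ind_measurable: "(\<lambda>x. desc_ind (g x)) \<in> borel_measurable N"
proof -
  have [measurable]: "(\<lambda>x. g x 0) \<in> borel_measurable N" "(\<lambda>x. g x 1) \<in> borel_measurable N"
    "(\<lambda>x. g x 2) \<in> borel_measurable N" using g_measurable by auto
  show ?thesis unfolding desc_ind_def by measurable
qed

lemma rank_measurable: "i < 3 \<Longrightarrow> (\<lambda>x. real (rank (g x) i)) \<in> borel_measurable N"
proof -
  assume "i < 3"
  then have [measurable]: "(\<lambda>x. g x 0) \<in> borel_measurable N" "(\<lambda>x. g x 1) \<in> borel_measurable N"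
    "(\<lambda>x. g x 2) \<in> borel_measurable N" "(\<lambda>x. g x i) \<in> borel_measurable N" using g_measurable by auto
  show ?thesis unfolding real_rank_explicit by measurable
qed

lemma rank_eq_pred: "i < 3 \<Longrightarrow> Measurable.pred N (\<lambda>x. rank (g x) i = c)"
proof -
  assume "i < 3"
  note [measurable] = rank_measurable[OF this]
  have "Measurable.pred N (\<lambda>x. real (rank (g x) i) = real c)" by measurable
  then show ?thesis by simp
qed

lemma eff_alloc_measurable: "i < 3 \<Longrightarrow> (\<lambda>x. eff_alloc i (g x)) \<in> borel_measurable N"
proof -
  assume "i < 3"
  note [measurable] = rank_eq_pred[OF this, of 0] rank_eq_pred[OF this, of 1]
  have eq: "(\<lambda>x. eff_alloc i (g x)) = (\<lambda>x. if rank (g x) i = 0 \<or> rank (g x) i = 1 then 1 else 0)"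
    by (auto simp: eff_alloc_def fun_eq_iff)
  show ?thesis unfolding eq by measurable
qed

lemma rank_pay_measurable:
  assumes Q1: "(\<lambda>z. Q1 (fst z) (snd z)) \<in> borel_measurable borel"
    and Q2: "(\<lambda>z. Q2 (fst z) (snd z)) \<in> borel_measurable borel" and i: "i < 3"
  shows "(\<lambda>x. rank_pay Q1 Q2 i (g x)) \<in> borel_measurable N"
proof -
  have [measurable]: "(\<lambda>x. g x 0) \<in> borel_measurable N" "(\<lambda>x. g x 1) \<in> borel_measurable N"
    "(\<lambda>x. g x 2) \<in> borel_measurable N" using g_measurable by auto
  have o0: "(\<lambda>x. ostat (g x) 0) \<in> borel_measurable N" unfolding ostat_0 by measurable
  have o1: "(\<lambda>x. ostat (g x) 1) \<in> borel_measurable N" unfolding ostat_1 by measurable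
  note [measurable] = rank_eq_pred[OF i, of 0] rank_eq_pred[OF i, of 1]
    borel_measurable_uncurry_comp[OF Q1 o0 o1] borel_measurable_uncurry_comp[OF Q2 o0 o1]
  show ?thesis unfolding rank_pay_def by measurable
qed

end

lemma measurable_fun_upd_pair:
  "j \<in> I \<Longrightarrow> (\<lambda>(v, t). v(j := t)) \<in> measurable (PiM I M \<Otimes>\<^sub>M M j) (PiM I M)"
  using measurable_fun_upd[where J=I and I=I and i=j and M=M and f=fst and h=snd]
  by (simp add: case_prod_beta' insert_absorb)

lemma distr_PiM_fun_upd:
  assumes D: "prob_space D" and j: "j \<in> I"
  shows "distr (PiM I (\<lambda>_. D) \<Otimes>\<^sub>M D) (PiM I (\<lambda>_. D)) (\<lambda>(v, t). v(j := t)) = PiM I (\<lambda>_. D)"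
proof -
  let ?M = "PiM I (\<lambda>_. D)"
  interpret D: prob_space D by (rule D)
  interpret M: prob_space ?M by (intro prob_space_PiM D)
  interpret pair_sigma_finite ?M D ..
  have upd: "(\<lambda>(t, v). v(j := t)) \<in> measurable (D \<Otimes>\<^sub>M ?M) ?M"
    using measurable_fun_upd[where J=I and I=I and i=j and M="\<lambda>_. D" and N="D \<Otimes>\<^sub>M ?M"
        and f=snd and h=fst] j
    by (simp add: case_prod_beta' insert_absorb)
  have "distr (?M \<Otimes>\<^sub>M D) ?M (\<lambda>(v, t). v(j := t))
      = distr (distr (D \<Otimes>\<^sub>M ?M) (?M \<Otimes>\<^sub>M D) (\<lambda>(x, y). (y, x))) ?M (\<lambda>(v, t). v(j := t))"
    by (simp flip: distr_pair_swap)
  also have "\<dots> = distr (D \<Otimes>\<^sub>M ?M) ?M (\<lambda>(t, v). v(j := t))"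
    using upd measurable_fun_upd_pair[OF j] by (subst distr_distr) (auto simp: comp_def case_prod_beta')
  also have "\<dots> = ?M"
    using distr_pair_PiM_eq_PiM[of I "\<lambda>_. D" j] D j by (simp add: insert_absorb)
  finally show ?thesis .
qed

lemma
  fixes h :: "('i \<Rightarrow> 'a) \<Rightarrow> real"
  assumes D: "prob_space D" and j: "j \<in> I" and h: "integrable (PiM I (\<lambda>_. D)) h"
  shows integral_PiM_fun_upd:
      "(\<integral>v. h v \<partial>PiM I (\<lambda>_. D)) = (\<integral>v. \<integral>t. h (v(j := t)) \<partial>D \<partial>PiM I (\<lambda>_. D))"
    and integrable_PiM_fun_upd:
      "integrable (PiM I (\<lambda>_. D)) (\<lambda>v. \<integral>t. h (v(j := t)) \<partial>D)"
proof -
  let ?M = "PiM I (\<lambda>_. D)"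
  interpret D: prob_space D by (rule D)
  interpret M: prob_space ?M by (intro prob_space_PiM D)
  interpret pair_sigma_finite ?M D ..
  have upd: "(\<lambda>(v, t). v(j := t)) \<in> measurable (?M \<Otimes>\<^sub>M D) ?M"
    by (rule measurable_fun_upd_pair[OF j])
  have "integrable (distr (?M \<Otimes>\<^sub>M D) ?M (\<lambda>(v, t). v(j := t))) h"
    using h by (simp add: distr_PiM_fun_upd[OF D j])
  then have hp: "integrable (?M \<Otimes>\<^sub>M D) (\<lambda>z. h (case z of (v, t) \<Rightarrow> v(j := t)))"
    using integrable_distr_eq[OF upd borel_measurable_integrable[OF h]] by simp
  have "(\<integral>v. h v \<partial>?M) = (\<integral>v. h v \<partial>distr (?M \<Otimes>\<^sub>M D) ?M (\<lambda>(v, t). v(j := t)))"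
    by (simp add: distr_PiM_fun_upd[OF D j])
  also have "\<dots> = (\<integral>z. h (case z of (v, t) \<Rightarrow> v(j := t)) \<partial>(?M \<Otimes>\<^sub>M D))"
    by (rule integral_distr[OF upd borel_measurable_integrable[OF h]])
  also have "\<dots> = (\<integral>v. \<integral>t. h (v(j := t)) \<partial>D \<partial>?M)"
    using integral_fst'[OF hp] by simp
  finally show "(\<integral>v. h v \<partial>?M) = (\<integral>v. \<integral>t. h (v(j := t)) \<partial>D \<partial>?M)" .
  show "integrable ?M (\<lambda>v. \<integral>t. h (v(j := t)) \<partial>D)"
    using integrable_fst'[OF hp] by simp
qed

lemma AE_PiM_fun_upd:
  assumes D: "prob_space D" and j: "j \<in> I"
    and P: "{v \<in> space (PiM I (\<lambda>_. D)). P v} \<in> sets (PiM I (\<lambda>_. D))"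
    and ae: "\<And>v. v \<in> space (PiM I (\<lambda>_. D)) \<Longrightarrow> AE t in D. P (v(j := t))"
  shows "AE v in PiM I (\<lambda>_. D). P v"
proof -
  let ?M = "PiM I (\<lambda>_. D)"
  interpret D: prob_space D by (rule D)
  interpret M: prob_space ?M by (intro prob_space_PiM D)
  interpret pair_sigma_finite ?M D ..
  have upd: "(\<lambda>(v, t). v(j := t)) \<in> measurable (?M \<Otimes>\<^sub>M D) ?M"
    by (rule measurable_fun_upd_pair[OF j])
  have "AE z in ?M \<Otimes>\<^sub>M D. P (case z of (v, t) \<Rightarrow> v(j := t))"
  proof (rule AE_pair_measure)
    have "{z \<in> space (?M \<Otimes>\<^sub>M D). P (case z of (v, t) \<Rightarrow> v(j := t))}
        = (\<lambda>(v, t). v(j := t)) -` {v \<in> space ?M. P v} \<inter> space (?M \<Otimes>\<^sub>M D)"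
      using measurable_space[OF upd] by auto
    then show "{z \<in> space (?M \<Otimes>\<^sub>M D). P (case z of (v, t) \<Rightarrow> v(j := t))} \<in> sets (?M \<Otimes>\<^sub>M D)"
      using measurable_sets[OF upd P] by simp
    show "AE v in ?M. AE t in D. P (case (v, t) of (v, t) \<Rightarrow> v(j := t))"
      by (rule AE_I2) (simp add: ae)
  qed
  then have "AE v in distr (?M \<Otimes>\<^sub>M D) ?M (\<lambda>(v, t). v(j := t)). P v"
    using P upd by (subst AE_distr_iff) auto
  then show ?thesis unfolding distr_PiM_fun_upd[OF D j] .
qed

lemma integral_PiM_reindex:
  fixes h :: "('i \<Rightarrow> 'a) \<Rightarrow> real"
  assumes D: "prob_space D" and \<sigma>: "inj_on \<sigma> I" "\<sigma> \<in> I \<rightarrow> I"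
    and h: "h \<in> borel_measurable (PiM I (\<lambda>_. D))"
  shows "(\<integral>v. h (\<lambda>i\<in>I. v (\<sigma> i)) \<partial>PiM I (\<lambda>_. D)) = (\<integral>v. h v \<partial>PiM I (\<lambda>_. D))"
proof -
  let ?M = "PiM I (\<lambda>_. D)"
  have re: "(\<lambda>v. \<lambda>i\<in>I. v (\<sigma> i)) \<in> measurable ?M ?M"
    using \<sigma>(2) by (intro measurable_restrict) (auto intro: measurable_component_singleton)
  have "distr ?M ?M (\<lambda>v. \<lambda>i\<in>I. v (\<sigma> i)) = ?M"
    using distr_PiM_reindex[of I "\<lambda>_. D" \<sigma> I] D \<sigma> by simp
  then show ?thesis
    using integral_distr[OF re h] by simp
qed

lemma (in finite_measure) integrable_bounded_real:
  fixes h :: "'a \<Rightarrow> real"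
  shows "h \<in> borel_measurable M \<Longrightarrow> (\<And>x. x \<in> space M \<Longrightarrow> \<bar>h x\<bar> \<le> B) \<Longrightarrow> integrable M h"
  by (intro integrable_const_bound[where B=B] AE_I2) auto

lemma sets_val_dist [measurable_cong]: "sets (val_dist f) = sets borel"
  by (simp add: val_dist_def)

lemma space_val_dist [simp]: "space (val_dist f) = UNIV"
  by (simp add: val_dist_def)

lemma prof_measure_eq: "prof_measure f = PiM {..<3} (\<lambda>_. val_dist f)"
  by (simp add: prof_measure_def bidders_def)

lemma box_iff: "v \<in> box vbar \<longleftrightarrow> v 0 \<in> {0..vbar} \<and> v 1 \<in> {0..vbar} \<and> v 2 \<in> {0..vbar}"
proof -
  have "{..<3::nat} = {0, 1, 2}" by auto
  then show ?thesis by (simp add: box_def bidders_def)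
qed

lemma fun_upd_in_box: "v \<in> box vbar \<Longrightarrow> w \<in> {0..vbar} \<Longrightarrow> v(j := w) \<in> box vbar"
  by (auto simp: box_def)

lemma ostat_in_box: "v \<in> box vbar \<Longrightarrow> ostat v 0 \<in> {0..vbar} \<and> ostat v 1 \<in> {0..vbar}"
  unfolding box_iff ostat_0 ostat_1 by (auto simp: max_def min_def)

section \<open>Three i.i.d. values\<close>

locale iid_values =
  fixes f :: "real \<Rightarrow> real" and vbar :: real
  assumes f_measurable [measurable]: "f \<in> borel_measurable borel"
    and f_vanishes: "\<And>x. x \<notin> {0..vbar} \<Longrightarrow> f x = 0"
    and prob_space_val_dist: "prob_space (val_dist f)"
begin

abbreviation "D \<equiv> val_dist f"
abbreviation "M \<equiv> PiM {..<3::nat} (\<lambda>_. D)"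

sublocale D: prob_space D
  by (rule prob_space_val_dist)

sublocale M: prob_space M
  by (intro prob_space_PiM prob_space_val_dist)

lemma AE_val_dist_neq: "AE t in D. t \<noteq> x"
proof -
  have "AE y in lborel. y \<in> {x} \<longrightarrow> ennreal (f y) = 0"
    using AE_lborel_singleton[of x] by eventually_elim auto
  then have "{x} \<in> null_sets (density lborel (\<lambda>x. ennreal (f x)))"
    by (subst null_sets_density_iff) auto
  then show ?thesis
    by (intro AE_I[of _ _ "{x}"]) (auto simp: val_dist_def null_setsD1)
qed

lemma AE_val_dist_range: "AE t in D. t \<in> {0..vbar}"
proof -
  have "- {0..vbar} \<in> null_sets (density lborel (\<lambda>x. ennreal (f x)))"
    by (subst null_sets_density_iff) (auto simp: f_vanishes)
  then show ?thesis
    by (intro AE_I[of _ _ "- {0..vbar}"]) (auto simp: val_dist_def null_setsD1)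
qed

lemma vbar_nonneg: "0 \<le> vbar"
proof (rule ccontr)
  assume "\<not> 0 \<le> vbar"
  then have "AE t in D. t \<notin> {0..vbar}" by simp
  with AE_val_dist_range show False by (rule D.AE_contr)
qed

lemma measurable_coordinate: "a < 3 \<Longrightarrow> (\<lambda>v. v a) \<in> borel_measurable M"
  by (subst measurable_cong_sets[OF refl sets_val_dist[symmetric]])
     (rule measurable_component_singleton, simp)

lemma measurable_fun_upd_coordinate:
  "j < 3 \<Longrightarrow> c < 3 \<Longrightarrow> (\<lambda>v. (v(j := w)) c) \<in> borel_measurable M"
  using measurable_coordinate[of c] by (cases "c = j") auto

lemma fun_upd_measurable: "j < 3 \<Longrightarrow> (\<lambda>v. v(j := w)) \<in> measurable M M"
  by (rule measurable_fun_upd[where J="{..<3}"]) auto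

lemma permute_profile_measurable: "k < 6 \<Longrightarrow> permute_profile k \<in> measurable M M"
  unfolding permute_profile_def
  by (rule measurable_restrict) (auto intro: measurable_component_singleton perm3_less)

lemma integral_permute_profile:
  fixes h :: "(nat \<Rightarrow> real) \<Rightarrow> real"
  shows "k < 6 \<Longrightarrow> h \<in> borel_measurable M \<Longrightarrow> (\<integral>v. h (permute_profile k v) \<partial>M) = (\<integral>v. h v \<partial>M)"
  using integral_PiM_reindex[OF prob_space_val_dist, of "perm3 k" "{..<3}" h]
  by (auto simp: permute_profile_def inj_on_def perm3_eq_iff perm3_less)

lemma AE_coordinate_neq: "a < 3 \<Longrightarrow> AE v in M. v a \<noteq> x"
  using AE_PiM_component[of "{..<3}" "\<lambda>_. D" a "\<lambda>t. t \<noteq> x"] prob_space_val_dist AE_val_dist_neq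
  by simp

lemma AE_coordinates_neq:
  assumes "a < 3" "b < 3" "a \<noteq> b"
  shows "AE v in M. v a \<noteq> v b"
proof (rule AE_PiM_fun_upd[OF prob_space_val_dist, of b])
  have "{v \<in> space M. v a = v b} \<in> sets M"
    using assms by (intro measurable_equality_set measurable_coordinate)
  then show "{v \<in> space M. v a \<noteq> v b} \<in> sets M"
    by (auto dest: sets.compl_sets simp: set_diff_eq Collect_neg_eq[symmetric])
  show "AE t in D. (v(b := t)) a \<noteq> (v(b := t)) b" for v
    using AE_val_dist_neq[of "v a"] by eventually_elim (use assms in auto)
qed (use assms in auto)

lemma AE_distinct: "AE v in M. v 0 \<noteq> v 1 \<and> v 0 \<noteq> v 2 \<and> v 1 \<noteq> v 2"
proof -
  have "AE v in M. v 0 \<noteq> v 1" "AE v in M. v 0 \<noteq> v 2" "AE v in M. v 1 \<noteq> v 2"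
    by (rule AE_coordinates_neq; simp)+
  then show ?thesis by eventually_elim auto
qed

lemma AE_in_box: "AE v in M. v \<in> box vbar"
proof -
  have "AE v in M. v a \<in> {0..vbar}" if "a < 3" for a
    using AE_PiM_component[of "{..<3}" "\<lambda>_. D" a "\<lambda>t. t \<in> {0..vbar}"] that
      prob_space_val_dist AE_val_dist_range
    by simp
  then have "AE v in M. v 0 \<in> {0..vbar}" "AE v in M. v 1 \<in> {0..vbar}" "AE v in M. v 2 \<in> {0..vbar}"
    by simp_all
  then show ?thesis by eventually_elim (simp add: box_iff)
qed

text \<open>Ties are null, so almost every profile is put in decreasing order by exactly one of the
  six relabellings.\<close>
lemma integral_sum_orderings:
  fixes \<Psi> :: "(nat \<Rightarrow> real) \<Rightarrow> real" and h :: "(nat \<Rightarrow> real) \<Rightarrow> nat \<Rightarrow> real"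
  assumes \<Psi>: "\<Psi> \<in> borel_measurable M" "\<And>v. v \<in> space M \<Longrightarrow> \<bar>\<Psi> v\<bar> \<le> B"
    and h: "\<And>c. c < 3 \<Longrightarrow> (\<lambda>v. h v c) \<in> borel_measurable M"
    and distinct: "AE v in M. h v 0 \<noteq> h v 1 \<and> h v 0 \<noteq> h v 2 \<and> h v 1 \<noteq> h v 2"
  shows "(\<integral>v. \<Psi> v \<partial>M) = (\<Sum>k<6. \<integral>v. desc_ind (\<lambda>c. h v (perm3_inv k c)) * \<Psi> v \<partial>M)"
proof -
  have meas: "(\<lambda>v. desc_ind (\<lambda>c. h v (perm3_inv k c)) * \<Psi> v) \<in> borel_measurable M" if "k < 6" for k
    using that by (intro borel_measurable_times desc_ind_measurable \<Psi>(1) h perm3_inv_less)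
  have "(\<integral>v. \<Psi> v \<partial>M) = (\<integral>v. (\<Sum>k<6. desc_ind (\<lambda>c. h v (perm3_inv k c)) * \<Psi> v) \<partial>M)"
  proof (rule integral_cong_AE)
    show "AE v in M. \<Psi> v = (\<Sum>k<6. desc_ind (\<lambda>c. h v (perm3_inv k c)) * \<Psi> v)"
      using distinct by eventually_elim (simp add: sum_distrib_right[symmetric] sum_desc_ind_perm3_inv)
  qed (use \<Psi>(1) meas in auto)
  also have "\<dots> = (\<Sum>k<6. \<integral>v. desc_ind (\<lambda>c. h v (perm3_inv k c)) * \<Psi> v \<partial>M)"
  proof (rule Bochner_Integration.integral_sum)
    fix k :: nat assume "k \<in> {..<6}"
    then show "integrable M (\<lambda>v. desc_ind (\<lambda>c. h v (perm3_inv k c)) * \<Psi> v)"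
      using \<Psi>(2) abs_desc_ind_mult_le order_trans
      by (intro M.integrable_bounded_real[where B=B] meas) (auto, blast)
  qed
  finally show ?thesis .
qed

text \<open>Relabelling the bidders preserves \<open>M\<close>, so each ordered region can be moved onto the
  decreasing one.\<close>
lemma integral_decreasing_decomposition:
  fixes \<Psi> :: "(nat \<Rightarrow> real) \<Rightarrow> real"
  assumes \<Psi>: "\<Psi> \<in> borel_measurable M" "\<And>v. v \<in> space M \<Longrightarrow> \<bar>\<Psi> v\<bar> \<le> B"
  shows "(\<integral>v. \<Psi> v \<partial>M) = (\<Sum>k<6. \<integral>v. desc_ind v * \<Psi> (permute_profile k v) \<partial>M)"
proof -
  have "(\<integral>v. \<Psi> v \<partial>M) = (\<Sum>k<6. \<integral>v. desc_ind (\<lambda>c. v (perm3_inv k c)) * \<Psi> v \<partial>M)"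
    by (rule integral_sum_orderings[OF \<Psi> measurable_coordinate AE_distinct])
  also have "\<dots> = (\<Sum>k<6. \<integral>v. desc_ind v * \<Psi> (permute_profile k v) \<partial>M)"
  proof (rule sum.cong[OF refl])
    fix k :: nat assume "k \<in> {..<6}"
    then have k: "k < 6" by simp
    have "(\<lambda>v. desc_ind (\<lambda>c. v (perm3_inv k c)) * \<Psi> v) \<in> borel_measurable M"
      using k by (intro borel_measurable_times desc_ind_measurable \<Psi>(1) measurable_coordinate perm3_inv_less)
    from integral_permute_profile[OF k this, symmetric] k
    show "(\<integral>v. desc_ind (\<lambda>c. v (perm3_inv k c)) * \<Psi> v \<partial>M) = (\<integral>v. desc_ind v * \<Psi> (permute_profile k v) \<partial>M)"
      by (simp add: desc_ind_permute_perm3_inv)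
  qed
  finally show ?thesis .
qed

lemma integral_fun_upd_decomposition:
  fixes \<Phi> :: "(nat \<Rightarrow> real) \<Rightarrow> real"
  assumes j: "j < 3" and \<Phi>: "\<Phi> \<in> borel_measurable M" "\<And>v. v \<in> space M \<Longrightarrow> \<bar>\<Phi> v\<bar> \<le> B"
  shows "(\<integral>v. \<Phi> (v(j := w)) \<partial>M)
    = (\<Sum>k<6. \<integral>v. desc_ind (v(perm3 k j := w)) * \<Phi> (permute_profile k (v(perm3 k j := w))) \<partial>M)"
proof -
  have upd: "(\<lambda>v. v(j := w)) \<in> measurable M M" by (rule fun_upd_measurable[OF j])
  have \<Phi>_upd: "(\<lambda>v. \<Phi> (v(j := w))) \<in> borel_measurable M"
    using measurable_comp[OF upd \<Phi>(1)] by (simp add: comp_def)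
  have distinct: "AE v in M. (v(j := w)) 0 \<noteq> (v(j := w)) 1 \<and> (v(j := w)) 0 \<noteq> (v(j := w)) 2
      \<and> (v(j := w)) 1 \<noteq> (v(j := w)) 2"
  proof -
    have "AE v in M. v 0 \<noteq> w" "AE v in M. v 1 \<noteq> w" "AE v in M. v 2 \<noteq> w"
      by (rule AE_coordinate_neq; simp)+
    with AE_distinct show ?thesis by eventually_elim auto
  qed
  have "(\<integral>v. \<Phi> (v(j := w)) \<partial>M)
      = (\<Sum>k<6. \<integral>v. desc_ind (\<lambda>c. (v(j := w)) (perm3_inv k c)) * \<Phi> (v(j := w)) \<partial>M)"
    using \<Phi>(2) measurable_space[OF upd]
    by (intro integral_sum_orderings[OF \<Phi>_upd _ measurable_fun_upd_coordinate[OF j] distinct]) auto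
  also have "\<dots> = (\<Sum>k<6. \<integral>v. desc_ind (v(perm3 k j := w)) * \<Phi> (permute_profile k (v(perm3 k j := w))) \<partial>M)"
  proof (rule sum.cong[OF refl])
    fix k :: nat assume "k \<in> {..<6}"
    then have k: "k < 6" by simp
    have "(\<lambda>v. desc_ind (\<lambda>c. (v(j := w)) (perm3_inv k c)) * \<Phi> (v(j := w))) \<in> borel_measurable M"
      using k j by (intro borel_measurable_times desc_ind_measurable \<Phi>_upd measurable_fun_upd_coordinate perm3_inv_less)
    from integral_permute_profile[OF k this, symmetric] k j
    show "(\<integral>v. desc_ind (\<lambda>c. (v(j := w)) (perm3_inv k c)) * \<Phi> (v(j := w)) \<partial>M)
      = (\<integral>v. desc_ind (v(perm3 k j := w)) * \<Phi> (permute_profile k (v(perm3 k j := w))) \<partial>M)"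
      by (simp add: permute_profile_fun_upd desc_ind_permute_perm3_inv)
  qed
  finally show ?thesis .
qed

lemma fun_upd_2_eq_profile3: "v \<in> space M \<Longrightarrow> v(2 := t) = profile3 (v 0) (v 1) t"
  by (auto simp: space_PiM PiE_iff extensional_def profile3_def fun_eq_iff)

text \<open>Integrating out the lowest value on the decreasing region: given the top two values
  \<open>a > b\<close>, the third one ranges over \<open>{..<b}\<close>. The map \<open>u\<close> is the identity or
  replaces coordinate 0 or 1 by a constant.\<close>
lemma
  fixes h :: "(nat \<Rightarrow> real) \<Rightarrow> real" and u :: "(nat \<Rightarrow> real) \<Rightarrow> nat \<Rightarrow> real"
  assumes u: "u \<in> measurable M M"
    and u_lowest: "\<And>v t. v \<in> space M \<Longrightarrow> u (v(2 := t)) = profile3 (u v 0) (u v 1) t"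
    and h: "h \<in> borel_measurable M" "\<And>v. \<bar>h v\<bar> \<le> B"
  shows integral_desc_lowest: "(\<integral>v. desc_ind (u v) * h (u v) \<partial>M)
      = (\<integral>v. of_bool (u v 1 < u v 0) * (\<integral>t. indicator {..<u v 1} t * h (profile3 (u v 0) (u v 1) t) \<partial>D) \<partial>M)"
    and integrable_desc_lowest: "integrable M
      (\<lambda>v. of_bool (u v 1 < u v 0) * (\<integral>t. indicator {..<u v 1} t * h (profile3 (u v 0) (u v 1) t) \<partial>D))"
proof -
  let ?\<Phi> = "\<lambda>v. desc_ind (u v) * h (u v)"
  have "(\<lambda>v. u v c) \<in> borel_measurable M" if "c < 3" for c
    using measurable_comp[OF u measurable_coordinate[OF that]] by (simp add: comp_def)
  then have "?\<Phi> \<in> borel_measurable M"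
    using measurable_comp[OF u h(1)] by (intro borel_measurable_times desc_ind_measurable) (auto simp: comp_def)
  then have int: "integrable M ?\<Phi>"
    using h(2) abs_desc_ind_mult_le order_trans by (intro M.integrable_bounded_real[where B=B]) blast+
  have inner: "(\<integral>t. ?\<Phi> (v(2 := t)) \<partial>D)
      = of_bool (u v 1 < u v 0) * (\<integral>t. indicator {..<u v 1} t * h (profile3 (u v 0) (u v 1) t) \<partial>D)"
    if "v \<in> space M" for v
    using that by (simp add: u_lowest desc_ind_profile3 mult.assoc)
  have "(\<integral>v. ?\<Phi> v \<partial>M) = (\<integral>v. \<integral>t. ?\<Phi> (v(2 := t)) \<partial>D \<partial>M)"
    by (rule integral_PiM_fun_upd[OF prob_space_val_dist _ int]) simp
  also have "\<dots> = (\<integral>v. of_bool (u v 1 < u v 0)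
      * (\<integral>t. indicator {..<u v 1} t * h (profile3 (u v 0) (u v 1) t) \<partial>D) \<partial>M)"
    by (intro Bochner_Integration.integral_cong refl) (simp add: inner)
  finally show "(\<integral>v. ?\<Phi> v \<partial>M) = (\<integral>v. of_bool (u v 1 < u v 0)
      * (\<integral>t. indicator {..<u v 1} t * h (profile3 (u v 0) (u v 1) t) \<partial>D) \<partial>M)" .
  show "integrable M (\<lambda>v. of_bool (u v 1 < u v 0)
      * (\<integral>t. indicator {..<u v 1} t * h (profile3 (u v 0) (u v 1) t) \<partial>D))"
  proof -
    have "integrable M (\<lambda>v. \<integral>t. ?\<Phi> (v(2 := t)) \<partial>D)"
      by (rule integrable_PiM_fun_upd[OF prob_space_val_dist _ int]) simp
    then show ?thesis
      by (subst Bochner_Integration.integrable_cong[OF refl]) (auto simp: inner)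
  qed
qed

lemma integral_desc_fun_upd:
  fixes h :: "(nat \<Rightarrow> real) \<Rightarrow> real"
  assumes m: "m < 2" and h: "h \<in> borel_measurable M" "\<And>v. \<bar>h v\<bar> \<le> B"
  shows "(\<integral>v. desc_ind (v(m := w)) * h (v(m := w)) \<partial>M)
    = (\<integral>v. of_bool ((v(m := w)) 1 < (v(m := w)) 0) * (\<integral>t. indicator {..<(v(m := w)) 1} t
        * h (profile3 ((v(m := w)) 0) ((v(m := w)) 1) t) \<partial>D) \<partial>M)"
proof (rule integral_desc_lowest[OF fun_upd_measurable _ h])
  fix v t assume "v \<in> space M"
  then have "v(m := w) \<in> space M"
    using measurable_space[OF fun_upd_measurable[of m w]] m by simp
  then have "(v(m := w))(2 := t) = profile3 ((v(m := w)) 0) ((v(m := w)) 1) t"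
    by (rule fun_upd_2_eq_profile3)
  then show "(v(2 := t))(m := w) = profile3 ((v(m := w)) 0) ((v(m := w)) 1) t"
    using m by (simp add: fun_upd_twist)
qed (use m in simp)

lemma
  fixes h :: "(nat \<Rightarrow> real) \<Rightarrow> real"
  assumes "h \<in> borel_measurable M" "\<And>v. \<bar>h v\<bar> \<le> B"
  shows integral_desc: "(\<integral>v. desc_ind v * h v \<partial>M)
      = (\<integral>v. of_bool (v 1 < v 0) * (\<integral>t. indicator {..<v 1} t * h (profile3 (v 0) (v 1) t) \<partial>D) \<partial>M)"
    and integrable_desc: "integrable M
      (\<lambda>v. of_bool (v 1 < v 0) * (\<integral>t. indicator {..<v 1} t * h (profile3 (v 0) (v 1) t) \<partial>D))"
  using integral_desc_lowest[of "\<lambda>v. v" h B] integrable_desc_lowest[of "\<lambda>v. v" h B] assms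
    fun_upd_2_eq_profile3
  by simp_all

lemma xfun_eff_alloc:
  assumes j: "j < 3"
  shows "xfun f eff_alloc j u = 2 * ((\<integral>v. desc_ind (v(0 := u)) \<partial>M) + (\<integral>v. desc_ind (v(1 := u)) \<partial>M))"
proof -
  have "xfun f eff_alloc j u = (\<integral>v. eff_alloc j (v(j := u)) \<partial>M)"
    by (simp add: xfun_def interim_def prof_measure_eq)
  also have "\<dots> = (\<Sum>k<6. \<integral>v. desc_ind (v(perm3 k j := u)) * eff_alloc j (permute_profile k (v(perm3 k j := u))) \<partial>M)"
  proof (rule integral_fun_upd_decomposition[OF j, where B=1])
    show "eff_alloc j \<in> borel_measurable M"
      using eff_alloc_measurable[of "\<lambda>v. v" M j] measurable_coordinate j by simp
  qed (simp add: eff_alloc_def)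
  also have "\<dots> = (\<Sum>k<6. \<integral>v. desc_ind (v(perm3 k j := u)) * of_bool (perm3 k j < 2) \<partial>M)"
    using j by (intro sum.cong refl Bochner_Integration.integral_cong) (auto simp: eff_alloc_permute_profile)
  also have "\<dots> = 2 * ((\<integral>v. desc_ind (v(0 := u)) \<partial>M) + (\<integral>v. desc_ind (v(1 := u)) \<partial>M))"
    using sum_perm3_fixed_bidder[OF j, of "\<lambda>m. \<integral>v. desc_ind (v(m := u)) * of_bool (m < 2) \<partial>M"]
    by (simp add: sum_lessThan_3)
  finally show ?thesis .
qed

lemma zfun_eff_alloc_bidder: "j < 3 \<Longrightarrow> zfun f eff_alloc j w = zfun f eff_alloc 0 w"
  using xfun_eff_alloc[of j] xfun_eff_alloc[of 0] by (simp add: zfun_def)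

end

section \<open>Convex functions\<close>

lemma convex_weighted_integral_sum_lower_bound:
  fixes g :: "real \<Rightarrow> real" and s :: real and w :: "'a \<Rightarrow> real" and X :: "'k \<Rightarrow> 'a \<Rightarrow> real"
  assumes g: "convex_on UNIV g"
    and w: "integrable N w" "\<And>t. t \<in> space N \<Longrightarrow> 0 \<le> w t"
    and X: "\<And>k. k \<in> K \<Longrightarrow> integrable N (\<lambda>t. w t * X k t)"
    and gX: "\<And>k. k \<in> K \<Longrightarrow> integrable N (\<lambda>t. w t * g (X k t))"
    and mean: "(\<Sum>k\<in>K. \<integral>t. w t * X k t \<partial>N) = card K * s * (\<integral>t. w t \<partial>N)"
  shows "card K * g s * (\<integral>t. w t \<partial>N) \<le> (\<Sum>k\<in>K. \<integral>t. w t * g (X k t) \<partial>N)"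
proof -
  obtain c where c: "\<And>y. g s + c * (y - s) \<le> g y"
    using convex_le_Inf_differential[OF g, of s] by auto
  have "(g s - c * s) * (\<integral>t. w t \<partial>N) + c * (\<integral>t. w t * X k t \<partial>N) \<le> (\<integral>t. w t * g (X k t) \<partial>N)"
    if k: "k \<in> K" for k
  proof -
    have "(g s - c * s) * (\<integral>t. w t \<partial>N) + c * (\<integral>t. w t * X k t \<partial>N)
        = (\<integral>t. (g s - c * s) * w t + c * (w t * X k t) \<partial>N)"
      using w(1) X[OF k] by simp
    also have "\<dots> \<le> (\<integral>t. w t * g (X k t) \<partial>N)"
    proof (rule integral_mono)
      show "(g s - c * s) * w t + c * (w t * X k t) \<le> w t * g (X k t)" if "t \<in> space N" for t
        using mult_left_mono[OF c[of "X k t"] w(2)[OF that]] by (simp add: algebra_simps)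
    qed (use w(1) X[OF k] gX[OF k] in auto)
    finally show ?thesis .
  qed
  then have "(\<Sum>k\<in>K. (g s - c * s) * (\<integral>t. w t \<partial>N) + c * (\<integral>t. w t * X k t \<partial>N))
      \<le> (\<Sum>k\<in>K. \<integral>t. w t * g (X k t) \<partial>N)"
    by (rule sum_mono)
  moreover have "(\<Sum>k\<in>K. (g s - c * s) * (\<integral>t. w t \<partial>N) + c * (\<integral>t. w t * X k t \<partial>N))
      = card K * ((g s - c * s) * (\<integral>t. w t \<partial>N)) + c * (card K * s * (\<integral>t. w t \<partial>N))"
    by (simp add: sum.distrib mean flip: sum_distrib_left)
  moreover have "\<dots> = card K * g s * (\<integral>t. w t \<partial>N)"
    by (simp add: algebra_simps)
  ultimately show ?thesis by simp
qed

lemma convex_on_shifted_square: "convex_on UNIV (\<lambda>x::real. (x - m)\<^sup>2)"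
proof (rule convex_onI)
  fix t x y :: real assume t: "0 < t" "t < 1"
  have "(1 - t) * (x - m)\<^sup>2 + t * (y - m)\<^sup>2 - ((1 - t) *\<^sub>R x + t *\<^sub>R y - m)\<^sup>2 = t * (1 - t) * (x - y)\<^sup>2"
    by (simp add: algebra_simps power2_eq_square)
  moreover have "0 \<le> t * (1 - t) * (x - y)\<^sup>2" using t by simp
  ultimately show "((1 - t) *\<^sub>R x + t *\<^sub>R y - m)\<^sup>2 \<le> (1 - t) * (x - m)\<^sup>2 + t * (y - m)\<^sup>2"
    by linarith
qed simp

lemma (in prob_space) variance_le_of_convex_order:
  fixes X Y :: "'a \<Rightarrow> real"
  assumes convex_le: "\<And>g :: real \<Rightarrow> real. convex_on UNIV g \<Longrightarrow> (\<integral>x. g (X x) \<partial>M) \<le> (\<integral>x. g (Y x) \<partial>M)"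
  shows "variance X \<le> variance Y"
proof -
  have "convex_on UNIV (\<lambda>x::real. - x)"
    by (rule convex_onI) (auto simp: algebra_simps)
  from convex_le[OF this] convex_le[OF convex_on_ident[THEN iffD2, OF convex_UNIV]]
  have "expectation X = expectation Y" by simp
  then show ?thesis
    using convex_le[OF convex_on_shifted_square[of "expectation Y"]] by simp
qed

section \<open>The symmetrized payment rule\<close>

locale implementing_payment = iid_values +
  fixes \<pi> :: "nat \<Rightarrow> (nat \<Rightarrow> real) \<Rightarrow> real"
  assumes payment: "payment_rule f vbar \<pi>"
    and implements: "implements f vbar eff_alloc \<pi>"
    and IR: "ex_post_IR vbar eff_alloc \<pi>"
begin

text \<open>\<open>\<pi>\<close> is constrained only on \<open>box vbar\<close>, which has full measure; truncating it to zero
  outside makes it bounded everywhere without changing any integral.\<close>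
definition pay :: "nat \<Rightarrow> (nat \<Rightarrow> real) \<Rightarrow> real" where
  "pay j v = (if v \<in> box vbar then \<pi> j v else 0)"

lemma \<pi>_measurable: "j < 3 \<Longrightarrow> \<pi> j \<in> borel_measurable M"
  using payment by (simp add: payment_rule_def bidders_def prof_measure_eq)

lemma pay_measurable: "j < 3 \<Longrightarrow> pay j \<in> borel_measurable M"
proof -
  assume "j < 3"
  note [measurable] = \<pi>_measurable[OF this] measurable_coordinate[of 0] measurable_coordinate[of 1]
    measurable_coordinate[of 2]
  show ?thesis unfolding pay_def[abs_def] box_iff by measurable
qed

lemma pay_nonneg: "j < 3 \<Longrightarrow> 0 \<le> pay j v"
  using payment by (auto simp: pay_def payment_rule_def bidders_def)

lemma pay_le_alloc: "j < 3 \<Longrightarrow> v \<in> box vbar \<Longrightarrow> pay j v \<le> v j * eff_alloc j v"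
  using IR by (auto simp: pay_def ex_post_IR_def bidders_def)

lemma value_in_box: "j < 3 \<Longrightarrow> v \<in> box vbar \<Longrightarrow> v j \<in> {0..vbar}"
  by (simp add: box_def bidders_def)

lemma pay_le_value: "j < 3 \<Longrightarrow> v \<in> box vbar \<Longrightarrow> pay j v \<le> v j"
  using pay_le_alloc[of j v] value_in_box[of j v] by (auto simp: eff_alloc_def split: if_splits)

lemma pay_le_vbar: "j < 3 \<Longrightarrow> pay j v \<le> vbar"
  using pay_le_value[of j v] value_in_box[of j v] vbar_nonneg by (auto simp: pay_def)

lemma abs_pay_le: "j < 3 \<Longrightarrow> \<bar>pay j v\<bar> \<le> vbar"
  using pay_nonneg[of j v] pay_le_vbar[of j v] by simp

lemma pay_unallocated: "j < 3 \<Longrightarrow> 2 \<le> rank v j \<Longrightarrow> pay j v = 0"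
  using pay_le_alloc[of j v] pay_nonneg[of j v] by (auto simp: pay_def eff_alloc_def)

lemma integral_pay_fun_upd:
  assumes j: "j < 3" and w: "w \<in> {0..vbar}"
  shows "(\<integral>v. pay j (v(j := w)) \<partial>M) = zfun f eff_alloc j w"
proof -
  have "(\<integral>v. pay j (v(j := w)) \<partial>M) = (\<integral>v. \<pi> j (v(j := w)) \<partial>M)"
  proof (rule integral_cong_AE)
    show "AE v in M. pay j (v(j := w)) = \<pi> j (v(j := w))"
      using AE_in_box by eventually_elim (simp add: pay_def fun_upd_in_box[OF _ w])
  qed (use measurable_comp[OF fun_upd_measurable[OF j] pay_measurable[OF j]]
      measurable_comp[OF fun_upd_measurable[OF j] \<pi>_measurable[OF j]] in \<open>simp_all add: comp_def\<close>)
  also have "\<dots> = zfun f eff_alloc j w"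
    using implements j w by (simp add: implements_def interim_def bidders_def prof_measure_eq)
  finally show ?thesis .
qed

definition cond_pay_mass :: "nat \<Rightarrow> nat \<Rightarrow> real \<Rightarrow> real \<Rightarrow> real" where
  "cond_pay_mass k j a b = (\<integral>t. indicator {..<b} t * pay j (permute_profile k (profile3 a b t)) \<partial>D)"

text \<open>The expected payment of the bidder ranked \<open>m\<close> (0 = highest) given the two highest
  values \<open>a > b\<close>, averaged over the six assignments of the ranks to bidders; the lowest value
  has law \<open>D\<close> restricted to \<open>{..<b}\<close>, of mass \<open>measure D {..<b}\<close> (where this vanishes, the
  value is the junk 0).\<close>
definition cond_pay :: "nat \<Rightarrow> real \<Rightarrow> real \<Rightarrow> real" where
  "cond_pay m a b = (\<Sum>k<6. cond_pay_mass k (perm3_inv k m) a b) / (6 * measure D {..<b})"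

abbreviation "sym_pay \<equiv> rank_pay (cond_pay 0) (cond_pay 1)"

lemma pay_permute_profile3_measurable:
  "k < 6 \<Longrightarrow> j < 3 \<Longrightarrow> (\<lambda>t. pay j (permute_profile k (profile3 a b t))) \<in> borel_measurable D"
proof -
  have "(\<lambda>t. profile3 a b t) \<in> measurable D M"
    unfolding profile3_def by (rule measurable_restrict) auto
  then show "k < 6 \<Longrightarrow> j < 3 \<Longrightarrow> ?thesis"
    using measurable_comp[OF measurable_comp[OF _ permute_profile_measurable] pay_measurable]
    by (simp add: comp_def)
qed

lemma integrable_cond_pay_integrand:
  "k < 6 \<Longrightarrow> j < 3 \<Longrightarrow> integrable D (\<lambda>t. indicator {..<b} t * pay j (permute_profile k (profile3 a b t)))"
  using abs_pay_le[of j] vbar_nonneg pay_permute_profile3_measurable[of k j a b]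
  by (intro D.integrable_bounded_real[where B=vbar]) (auto simp: indicator_def)

lemma integrable_indicator_lessThan: "integrable D (\<lambda>t. indicator {..<b} t :: real)"
  by (rule D.integrable_bounded_real[where B=1]) (auto simp: indicator_def)

lemma integral_indicator_lessThan_mult: "(\<integral>t. indicator {..<b} t * c \<partial>D) = c * measure D {..<b}"
  by simp

lemma cond_pay_mass_nonneg: "j < 3 \<Longrightarrow> 0 \<le> cond_pay_mass k j a b"
  unfolding cond_pay_mass_def by (intro Bochner_Integration.integral_nonneg mult_nonneg_nonneg pay_nonneg) auto

lemma cond_pay_mass_le:
  assumes "k < 6" "j < 3" "\<And>t. pay j (permute_profile k (profile3 a b t)) \<le> c"
  shows "cond_pay_mass k j a b \<le> c * measure D {..<b}"
proof -
  have "cond_pay_mass k j a b \<le> (\<integral>t. c * indicator {..<b} t \<partial>D)"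
    unfolding cond_pay_mass_def
    using assms integrable_cond_pay_integrand[of k j b a] integrable_indicator_lessThan[of b]
    by (intro integral_mono) (auto simp: indicator_def)
  then show ?thesis by simp
qed

lemma cond_pay_mult_measure:
  assumes "m < 3"
  shows "cond_pay m a b * measure D {..<b} = (\<Sum>k<6. cond_pay_mass k (perm3_inv k m) a b) / 6"
proof (cases "measure D {..<b} = 0")
  case True
  have "cond_pay_mass k (perm3_inv k m) a b = 0" if "k < 6" for k
    using cond_pay_mass_le[of k "perm3_inv k m" a b vbar] cond_pay_mass_nonneg[of "perm3_inv k m" k a b]
      pay_le_vbar perm3_inv_less[OF that assms] True that by simp
  then show ?thesis by (simp add: cond_pay_def True)
qed (simp add: cond_pay_def)

lemma cond_pay_nonneg: "m < 3 \<Longrightarrow> 0 \<le> cond_pay m a b"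
  unfolding cond_pay_def
  by (intro divide_nonneg_nonneg sum_nonneg cond_pay_mass_nonneg perm3_inv_less) auto

lemma cond_pay_le:
  assumes m: "m < 3" and c: "0 \<le> c" "\<And>k t. k < 6 \<Longrightarrow> pay (perm3_inv k m) (permute_profile k (profile3 a b t)) \<le> c"
  shows "cond_pay m a b \<le> c"
proof (cases "measure D {..<b} = 0")
  case False
  then have pos: "0 < measure D {..<b}" using measure_nonneg[of D "{..<b}"] by linarith
  have "(\<Sum>k<6. cond_pay_mass k (perm3_inv k m) a b) \<le> (\<Sum>k<6::nat. c * measure D {..<b})"
    using m c by (intro sum_mono cond_pay_mass_le perm3_inv_less) auto
  then show ?thesis using pos by (simp add: cond_pay_def divide_le_eq mult_ac)
qed (simp add: cond_pay_def c)

lemma cond_pay_le_vbar: "m < 3 \<Longrightarrow> cond_pay m a b \<le> vbar"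
  by (intro cond_pay_le vbar_nonneg pay_le_vbar perm3_inv_less)

lemma abs_sym_pay_le: "\<bar>sym_pay i v\<bar> \<le> vbar"
  using cond_pay_nonneg[of 0] cond_pay_nonneg[of 1] cond_pay_le_vbar[of 0] cond_pay_le_vbar[of 1]
    vbar_nonneg
  by (auto simp: rank_pay_def)

lemma sym_pay_nonneg: "0 \<le> sym_pay i v"
  using cond_pay_nonneg[of 0] cond_pay_nonneg[of 1] by (auto simp: rank_pay_def)

lemma cond_pay_le_value:
  assumes m: "m < 2" and a: "a \<in> {0..vbar}" and b: "b \<in> {0..vbar}"
  shows "cond_pay m a b \<le> profile3 a b 0 m"
proof (rule cond_pay_le)
  show "0 \<le> profile3 a b 0 m"
    using m a b by (auto simp: profile3_def)
  fix k :: nat and t :: real assume k: "k < 6"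
  show "pay (perm3_inv k m) (permute_profile k (profile3 a b t)) \<le> profile3 a b 0 m"
  proof (cases "permute_profile k (profile3 a b t) \<in> box vbar")
    case True
    have "m < 3" using m by simp
    with True k have "pay (perm3_inv k m) (permute_profile k (profile3 a b t))
        \<le> permute_profile k (profile3 a b t) (perm3_inv k m)"
      by (intro pay_le_value perm3_inv_less)
    also have "\<dots> = profile3 a b 0 m"
      using m k by (simp add: permute_profile_perm3_inv profile3_def)
    finally show ?thesis .
  next
    case False
    then show ?thesis using m a b by (auto simp: pay_def profile3_def)
  qed
qed (use m in simp)

lemma sym_pay_IR: "ex_post_IR vbar eff_alloc sym_pay"
  unfolding ex_post_IR_def
proof (intro ballI)
  fix i v assume "i \<in> bidders" and v: "v \<in> box vbar"
  then have i: "i < 3" by (simp add: bidders_def)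
  have "sym_pay i v \<le> v i" if "rank v i = m" "m < 2" for m
  proof -
    have "sym_pay i v = cond_pay m (ostat v 0) (ostat v 1)"
      using that by (cases m) (auto simp: rank_pay_def)
    also have "\<dots> \<le> profile3 (ostat v 0) (ostat v 1) 0 m"
      using that ostat_in_box[OF v] by (intro cond_pay_le_value) auto
    also have "\<dots> = v i"
      using rank_ostat[OF i, of v] that by (auto simp: profile3_def)
    finally show ?thesis .
  qed
  then show "0 \<le> v i * eff_alloc i v - sym_pay i v"
    by (cases "rank v i < 2") (auto simp: eff_alloc_def rank_pay_def)
qed

lemma cond_pay_mass_measurable:
  assumes k: "k < 6" and j: "j < 3"
  shows "(\<lambda>z. cond_pay_mass k j (fst z) (snd z)) \<in> borel_measurable borel"
proof -
  have fst_borel: "fst \<in> borel_measurable (borel :: (real \<times> real) measure)"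
    and snd_borel: "snd \<in> borel_measurable (borel :: (real \<times> real) measure)"
    using measurable_fst[of "borel :: real measure" "borel :: real measure"]
      measurable_snd[of "borel :: real measure" "borel :: real measure"]
    by (simp_all add: borel_prod)
  have [measurable]: "(\<lambda>z :: (real \<times> real) \<times> real. snd (fst z)) \<in> borel_measurable (borel \<Otimes>\<^sub>M D)"
    "(snd :: (real \<times> real) \<times> real \<Rightarrow> real) \<in> borel_measurable (borel \<Otimes>\<^sub>M D)"
    using measurable_comp[OF measurable_fst[of "borel :: (real \<times> real) measure" D] snd_borel]
    by (simp_all add: measurable_cong_sets[OF refl sets_val_dist] comp_def)
  have [measurable]: "(\<lambda>z :: (real \<times> real) \<times> real. fst (fst z)) \<in> measurable (borel \<Otimes>\<^sub>M D) D"
    "(\<lambda>z :: (real \<times> real) \<times> real. snd (fst z)) \<in> measurable (borel \<Otimes>\<^sub>M D) D"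
    "(snd :: (real \<times> real) \<times> real \<Rightarrow> real) \<in> measurable (borel \<Otimes>\<^sub>M D) D"
    using measurable_comp[OF measurable_fst[of "borel :: (real \<times> real) measure" D] fst_borel]
      measurable_comp[OF measurable_fst[of "borel :: (real \<times> real) measure" D] snd_borel]
    by (simp_all add: measurable_cong_sets[OF refl sets_val_dist] comp_def)
  have "(\<lambda>z :: (real \<times> real) \<times> real. profile3 (fst (fst z)) (snd (fst z)) (snd z))
      \<in> measurable (borel \<Otimes>\<^sub>M D) M"
    unfolding profile3_def by (rule measurable_restrict) auto
  then have [measurable]: "(\<lambda>z :: (real \<times> real) \<times> real. pay j (permute_profile k (profile3 (fst (fst z)) (snd (fst z)) (snd z))))
      \<in> borel_measurable (borel \<Otimes>\<^sub>M D)"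
    using measurable_comp[OF measurable_comp[OF _ permute_profile_measurable[OF k]] pay_measurable[OF j]]
    by (simp add: comp_def)
  have "(\<lambda>z :: (real \<times> real) \<times> real. indicator {..<snd (fst z)} (snd z)
      * pay j (permute_profile k (profile3 (fst (fst z)) (snd (fst z)) (snd z))))
      \<in> borel_measurable (borel \<Otimes>\<^sub>M D)"
    unfolding indicator_def lessThan_iff of_bool_def by measurable
  then show ?thesis
    unfolding cond_pay_mass_def
    by (intro D.borel_measurable_lebesgue_integral[where f="\<lambda>z t. indicator {..<snd z} t
        * pay j (permute_profile k (profile3 (fst z) (snd z) t))", simplified])
       (simp add: case_prod_beta')
qed

lemma measure_lessThan_measurable: "(\<lambda>b. measure D {..<b}) \<in> borel_measurable borel"
  by (rule borel_measurable_mono) (auto intro!: monoI D.finite_measure_mono)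

lemma cond_pay_measurable: "m < 3 \<Longrightarrow> (\<lambda>z. cond_pay m (fst z) (snd z)) \<in> borel_measurable borel"
proof -
  assume m: "m < 3"
  have [measurable]: "(\<lambda>z. cond_pay_mass k (perm3_inv k m) (fst z) (snd z)) \<in> borel_measurable borel"
    if "k < 6" for k
    using cond_pay_mass_measurable[OF that perm3_inv_less[OF that m]] .
  have [measurable]: "(\<lambda>z :: real \<times> real. measure D {..<snd z}) \<in> borel_measurable borel"
    using measurable_comp[OF measurable_snd[of "borel :: real measure" "borel :: real measure"]
        measure_lessThan_measurable]
    by (simp add: comp_def borel_prod)
  show ?thesis unfolding cond_pay_def by measurable
qed

lemma sym_pay_measurable: "i < 3 \<Longrightarrow> sym_pay i \<in> borel_measurable M"
  using rank_pay_measurable[of "\<lambda>v. v" M "cond_pay 0" "cond_pay 1" i] measurable_coordinate cond_pay_measurable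
  by simp

definition interim_mass :: "real \<Rightarrow> nat \<Rightarrow> nat \<Rightarrow> real" where
  "interim_mass w m k = (\<integral>v. of_bool ((v(m := w)) 1 < (v(m := w)) 0)
     * cond_pay_mass k (perm3_inv k m) ((v(m := w)) 0) ((v(m := w)) 1) \<partial>M)"

lemma integral_desc_pay:
  assumes k: "k < 6" and m: "m < 2"
  shows "(\<integral>v. desc_ind (v(m := w)) * pay (perm3_inv k m) (permute_profile k (v(m := w))) \<partial>M)
    = interim_mass w m k"
proof -
  have j: "perm3_inv k m < 3" using perm3_inv_less[OF k] m by simp
  show ?thesis
    unfolding interim_mass_def cond_pay_mass_def
    using measurable_comp[OF permute_profile_measurable[OF k] pay_measurable[OF j]] abs_pay_le[OF j]
    by (subst integral_desc_fun_upd[OF m, where B=vbar]) (simp_all add: comp_def)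
qed

lemma integral_desc_cond_pay:
  assumes m: "m < 2"
  shows "(\<integral>v. desc_ind (v(m := w)) * cond_pay m ((v(m := w)) 0) ((v(m := w)) 1) \<partial>M)
    = (\<Sum>k<6. interim_mass w m k) / 6"
proof -
  have m3: "m < 3" using m by simp
  let ?a = "\<lambda>v. (v(m := w)) 0" and ?b = "\<lambda>v. (v(m := w)) 1"
  have a: "?a \<in> borel_measurable M" and b: "?b \<in> borel_measurable M"
    using measurable_fun_upd_coordinate[of m 0 w] measurable_fun_upd_coordinate[of m 1 w] m by auto
  have mass_meas: "(\<lambda>v. cond_pay_mass k (perm3_inv k m) (?a v) (?b v)) \<in> borel_measurable M" if "k < 6" for k
    by (rule borel_measurable_uncurry_comp[OF cond_pay_mass_measurable[OF that perm3_inv_less[OF that m3]] a b])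
  have "(\<integral>v. desc_ind (v(m := w)) * cond_pay m ((v(m := w)) 0) ((v(m := w)) 1) \<partial>M)
      = (\<integral>v. of_bool (?b v < ?a v) * (cond_pay m (?a v) (?b v) * measure D {..<?b v}) \<partial>M)"
  proof (subst integral_desc_fun_upd[OF m, where B=vbar])
    show "(\<lambda>y. cond_pay m (y 0) (y 1)) \<in> borel_measurable M"
      by (rule borel_measurable_uncurry_comp[OF cond_pay_measurable[OF m3]] measurable_coordinate; simp)
    show "\<bar>cond_pay m (y 0) (y 1)\<bar> \<le> vbar" for y
      using cond_pay_nonneg[OF m3] cond_pay_le_vbar[OF m3] by (simp add: abs_le_iff)
  qed (simp add: profile3_def integral_indicator_lessThan_mult mult_ac)
  also have "\<dots> = (\<integral>v. (\<Sum>k<6. of_bool (?b v < ?a v) * cond_pay_mass k (perm3_inv k m) (?a v) (?b v) / 6) \<partial>M)"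
    by (simp only: cond_pay_mult_measure[OF m3] sum_distrib_left sum_divide_distrib times_divide_eq_right)
  also have "\<dots> = (\<Sum>k<6. interim_mass w m k) / 6"
  proof (subst Bochner_Integration.integral_sum)
    fix k :: nat assume "k \<in> {..<6}"
    then have k: "k < 6" by simp
    have ind: "(\<lambda>v. of_bool (?b v < ?a v) :: real) \<in> borel_measurable M"
      using a b unfolding of_bool_def by measurable
    show "integrable M (\<lambda>v. of_bool (?b v < ?a v) * cond_pay_mass k (perm3_inv k m) (?a v) (?b v) / 6)"
    proof (rule M.integrable_bounded_real[where B=vbar])
      fix v
      have "cond_pay_mass k (perm3_inv k m) (?a v) (?b v) \<le> vbar * measure D {..<?b v}"
        using perm3_inv_less[OF k m3] by (intro cond_pay_mass_le[OF k] pay_le_vbar)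
      also have "\<dots> \<le> vbar" using vbar_nonneg by (simp add: mult_left_le)
      finally have "cond_pay_mass k (perm3_inv k m) (?a v) (?b v) \<le> vbar" .
      moreover have "\<bar>of_bool P * x / 6\<bar> \<le> vbar" if "0 \<le> x" "x \<le> vbar" for P x
        using that by (cases P) auto
      ultimately show "\<bar>of_bool (?b v < ?a v) * cond_pay_mass k (perm3_inv k m) (?a v) (?b v) / 6\<bar> \<le> vbar"
        using cond_pay_mass_nonneg[OF perm3_inv_less[OF k m3]] by blast
    qed (intro borel_measurable_divide borel_measurable_times ind mass_meas[OF k] borel_measurable_const)
  qed (simp add: interim_mass_def sum_divide_distrib)
  finally show ?thesis .
qed

lemma sum_zfun_eff_alloc:
  assumes w: "w \<in> {0..vbar}"
  shows "(\<Sum>j<3. zfun f eff_alloc j w) = (\<Sum>k<6. interim_mass w 0 k + interim_mass w 1 k)"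
proof -
  define F where "F k j m = (\<integral>v. desc_ind (v(m := w)) * pay j (permute_profile k (v(m := w))) \<partial>M)" for k j m
  have "(\<Sum>j<3. zfun f eff_alloc j w) = (\<Sum>j<3. \<integral>v. pay j (v(j := w)) \<partial>M)"
    using w by (simp add: integral_pay_fun_upd)
  also have "\<dots> = (\<Sum>j<3. \<Sum>k<6. F k j (perm3 k j))"
  proof (rule sum.cong[OF refl])
    fix j :: nat assume "j \<in> {..<3}"
    then have j: "j < 3" by simp
    show "(\<integral>v. pay j (v(j := w)) \<partial>M) = (\<Sum>k<6. F k j (perm3 k j))"
      unfolding F_def
      by (rule integral_fun_upd_decomposition[OF j pay_measurable[OF j]]) (rule abs_pay_le[OF j])
  qed
  also have "\<dots> = (\<Sum>k<6. \<Sum>m<3. F k (perm3_inv k m) m)"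
    by (subst sum.swap) (rule sum.cong[OF refl], rule sum_perm3_reindex, simp)
  also have "\<dots> = (\<Sum>k<6. interim_mass w 0 k + interim_mass w 1 k)"
  proof (rule sum.cong[OF refl])
    fix k :: nat assume "k \<in> {..<6}"
    then have k: "k < 6" by simp
    have lowest: "desc_ind y * pay (perm3_inv k 2) (permute_profile k y) = 0" for y
      using k rank_permute_profile[of y k "perm3_inv k 2"] perm3_inv_less[OF k, of 2]
      by (cases "desc_ind y = 0") (auto simp: perm3_perm3_inv pay_unallocated desc_ind_nonzero_iff)
    have "F k (perm3_inv k 2) 2 = 0"
      unfolding F_def lowest by simp
    then show "(\<Sum>m<3. F k (perm3_inv k m) m) = interim_mass w 0 k + interim_mass w 1 k"
      using k by (simp add: sum_lessThan_3 F_def integral_desc_pay)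
  qed
  finally show ?thesis .
qed

lemma interim_sym_pay:
  assumes i: "i < 3" and w: "w \<in> {0..vbar}"
  shows "interim f sym_pay i w = zfun f eff_alloc i w"
proof -
  define G where "G m y = (if m = 0 then cond_pay 0 (y 0) (y 1) else if m = 1 then cond_pay 1 (y 0) (y 1) else 0)"
    for m :: nat and y :: "nat \<Rightarrow> real"
  define H where "H m = (\<integral>v. desc_ind (v(m := w)) * G m (v(m := w)) \<partial>M)" for m
  have "interim f sym_pay i w = (\<integral>v. sym_pay i (v(i := w)) \<partial>M)"
    by (simp add: interim_def prof_measure_eq)
  also have "\<dots> = (\<Sum>k<6. \<integral>v. desc_ind (v(perm3 k i := w)) * sym_pay i (permute_profile k (v(perm3 k i := w))) \<partial>M)"
    by (rule integral_fun_upd_decomposition[OF i sym_pay_measurable[OF i]]) (rule abs_sym_pay_le)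
  also have "\<dots> = (\<Sum>k<6. H (perm3 k i))"
  proof (rule sum.cong[OF refl])
    fix k :: nat assume "k \<in> {..<6}"
    then have k: "k < 6" by simp
    have "desc_ind y * sym_pay i (permute_profile k y) = desc_ind y * G (perm3 k i) y" for y
      unfolding G_def by (rule rank_pay_permute_profile[OF k i])
    then show "(\<integral>v. desc_ind (v(perm3 k i := w)) * sym_pay i (permute_profile k (v(perm3 k i := w))) \<partial>M)
      = H (perm3 k i)"
      by (simp only: H_def)
  qed
  also have "\<dots> = 2 * (H 0 + H 1 + H 2)"
    by (simp add: sum_perm3_fixed_bidder[OF i] sum_lessThan_3)
  also have "\<dots> = (\<Sum>j<3. zfun f eff_alloc j w) / 3"
  proof -
    have "H 0 = (\<Sum>k<6. interim_mass w 0 k) / 6" "H 1 = (\<Sum>k<6. interim_mass w 1 k) / 6" "H 2 = 0"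
      using integral_desc_cond_pay[of 0 w] integral_desc_cond_pay[of 1 w] by (simp_all add: H_def G_def)
    then show ?thesis by (simp add: sum_zfun_eff_alloc[OF w] sum.distrib)
  qed
  also have "\<dots> = zfun f eff_alloc i w"
    using zfun_eff_alloc_bidder[OF i, of w] zfun_eff_alloc_bidder[of 1 w] zfun_eff_alloc_bidder[of 2 w]
    by (simp add: sum_lessThan_3)
  finally show ?thesis .
qed

subsection \<open>Revenue and the convex order\<close>

definition pay_revenue :: "(nat \<Rightarrow> real) \<Rightarrow> real" where
  "pay_revenue v = (\<Sum>i<3. pay i v)"

definition sym_revenue :: "(nat \<Rightarrow> real) \<Rightarrow> real" where
  "sym_revenue v = (\<Sum>i<3. sym_pay i v)"

definition cond_revenue :: "real \<Rightarrow> real \<Rightarrow> real" where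
  "cond_revenue a b = cond_pay 0 a b + cond_pay 1 a b"

lemma pay_revenue_measurable: "pay_revenue \<in> borel_measurable M"
  unfolding pay_revenue_def[abs_def] by (intro borel_measurable_sum pay_measurable) auto

lemma pay_revenue_range: "pay_revenue v \<in> {0..3 * vbar}"
proof -
  have "pay_revenue v \<le> (\<Sum>i<3::nat. vbar)"
    unfolding pay_revenue_def by (intro sum_mono pay_le_vbar) auto
  moreover have "0 \<le> pay_revenue v"
    unfolding pay_revenue_def by (intro sum_nonneg pay_nonneg) auto
  ultimately show ?thesis by simp
qed

lemma sym_revenue_range: "sym_revenue v \<in> {0..3 * vbar}"
proof -
  have "sym_revenue v \<le> (\<Sum>i<3::nat. vbar)" "0 \<le> sym_revenue v"
    unfolding sym_revenue_def using abs_sym_pay_le sym_pay_nonneg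
    by (intro sum_mono sum_nonneg; force simp: abs_le_iff)+
  then show ?thesis by simp
qed

lemma cond_revenue_range: "cond_revenue a b \<in> {0..3 * vbar}"
  using cond_pay_nonneg[of 0 a b] cond_pay_nonneg[of 1 a b] cond_pay_le_vbar[of 0 a b]
    cond_pay_le_vbar[of 1 a b] vbar_nonneg
  by (simp add: cond_revenue_def)

lemma sym_revenue_permute_profile:
  assumes k: "k < 6"
  shows "desc_ind y * g (sym_revenue (permute_profile k y)) = desc_ind y * g (cond_revenue (y 0) (y 1))"
proof (cases "desc_ind y = 0")
  case False
  define G where "G m = (if m = 0 then cond_pay 0 (y 0) (y 1) else if m = 1 then cond_pay 1 (y 0) (y 1) else 0)"
    for m :: nat
  have "sym_pay i (permute_profile k y) = G (perm3 k i)" if "i < 3" for i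
    using rank_pay_permute_profile[OF k that, of y "cond_pay 0" "cond_pay 1"] False by (simp add: G_def)
  then have "sym_revenue (permute_profile k y) = (\<Sum>i<3. G (perm3 k i))"
    unfolding sym_revenue_def by (intro sum.cong) auto
  also have "\<dots> = cond_revenue (y 0) (y 1)"
    using sum_perm3_reindex[OF k, of "\<lambda>i m. G m"] by (simp add: sum_lessThan_3 G_def cond_revenue_def)
  finally show ?thesis by simp
qed simp

lemma pay_revenue_profile3:
  assumes k: "k < 6" and "b < a" "t < b"
  shows "pay_revenue (permute_profile k (profile3 a b t))
    = pay (perm3_inv k 0) (permute_profile k (profile3 a b t)) + pay (perm3_inv k 1) (permute_profile k (profile3 a b t))"
proof -
  have "rank (permute_profile k (profile3 a b t)) (perm3_inv k 2) = 2"
    using rank_permute_profile[of "profile3 a b t" k "perm3_inv k 2"] perm3_inv_less[OF k, of 2] assms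
    by (simp add: perm3_perm3_inv profile3_def)
  then have "pay (perm3_inv k 2) (permute_profile k (profile3 a b t)) = 0"
    using perm3_inv_less[OF k, of 2] by (intro pay_unallocated) auto
  then show ?thesis
    using sum_perm3_reindex[OF k, of "\<lambda>i m. pay i (permute_profile k (profile3 a b t))"]
    by (simp add: pay_revenue_def sum_lessThan_3)
qed

lemma integrable_indicator_comp_pay_revenue:
  fixes g :: "real \<Rightarrow> real"
  assumes k: "k < 6" and g: "g \<in> borel_measurable borel" "\<And>x. x \<in> {0..3 * vbar} \<Longrightarrow> \<bar>g x\<bar> \<le> Bg"
  shows "integrable D (\<lambda>t. indicator {..<b} t * g (pay_revenue (permute_profile k (profile3 a b t))))"
proof (rule D.integrable_bounded_real[where B=Bg])
  have "(\<lambda>t. profile3 a b t) \<in> measurable D M"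
    unfolding profile3_def by (rule measurable_restrict) auto
  then have "(\<lambda>t. g (pay_revenue (permute_profile k (profile3 a b t)))) \<in> borel_measurable D"
    using measurable_comp[OF measurable_comp[OF measurable_comp[OF _ permute_profile_measurable[OF k]]
        pay_revenue_measurable] g(1)]
    by (simp add: comp_def)
  moreover have "(\<lambda>t. indicator {..<b} t :: real) \<in> borel_measurable D"
    using borel_measurable_indicator[of "{..<b}" D] by (simp add: sets_val_dist)
  ultimately show "(\<lambda>t. indicator {..<b} t * g (pay_revenue (permute_profile k (profile3 a b t))))
      \<in> borel_measurable D"
    by (rule borel_measurable_times[rotated])
  have "0 \<le> Bg" using g(2)[of 0] vbar_nonneg by force
  then show "\<bar>indicator {..<b} t * g (pay_revenue (permute_profile k (profile3 a b t)))\<bar> \<le> Bg" for t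
    using g(2)[OF pay_revenue_range] by (auto simp: indicator_def)
qed

text \<open>Conditionally on the top two values \<open>a > b\<close>, the revenue of \<open>sym_pay\<close> is the mean of
  the revenue of \<open>pay\<close> over the lowest value and the six labellings, so Jensen applies.\<close>
lemma cond_revenue_jensen:
  fixes g :: "real \<Rightarrow> real"
  assumes g: "convex_on UNIV g" "g \<in> borel_measurable borel" "\<And>x. x \<in> {0..3 * vbar} \<Longrightarrow> \<bar>g x\<bar> \<le> Bg"
    and ab: "b < a"
  shows "6 * g (cond_revenue a b) * measure D {..<b}
    \<le> (\<Sum>k<6. \<integral>t. indicator {..<b} t * g (pay_revenue (permute_profile k (profile3 a b t))) \<partial>D)"
proof -
  let ?X = "\<lambda>k t. pay_revenue (permute_profile k (profile3 a b t))"
  have mass: "(\<integral>t. indicator {..<b} t * ?X k t \<partial>D)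
      = cond_pay_mass k (perm3_inv k 0) a b + cond_pay_mass k (perm3_inv k 1) a b" if k: "k < 6" for k
  proof -
    have "(\<integral>t. indicator {..<b} t * ?X k t \<partial>D)
        = (\<integral>t. indicator {..<b} t * pay (perm3_inv k 0) (permute_profile k (profile3 a b t))
            + indicator {..<b} t * pay (perm3_inv k 1) (permute_profile k (profile3 a b t)) \<partial>D)"
      using pay_revenue_profile3[OF k ab] by (intro Bochner_Integration.integral_cong) (auto simp: indicator_def algebra_simps)
    then show ?thesis
      using integrable_cond_pay_integrand[OF k perm3_inv_less[OF k], of 0 b a]
        integrable_cond_pay_integrand[OF k perm3_inv_less[OF k], of 1 b a]
      by (simp add: cond_pay_mass_def)
  qed
  have "card {..<6::nat} * g (cond_revenue a b) * (\<integral>t. indicator {..<b} t \<partial>D)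
      \<le> (\<Sum>k<6. \<integral>t. indicator {..<b} t * g (?X k t) \<partial>D)"
  proof (rule convex_weighted_integral_sum_lower_bound[OF g(1) integrable_indicator_lessThan])
    fix k :: nat assume "k \<in> {..<6}"
    then have k: "k < 6" by simp
    show "integrable D (\<lambda>t. indicator {..<b} t * ?X k t)"
      using integrable_indicator_comp_pay_revenue[OF k, of "\<lambda>x. x" "3 * vbar"] pay_revenue_range by simp
    show "integrable D (\<lambda>t. indicator {..<b} t * g (?X k t))"
      by (rule integrable_indicator_comp_pay_revenue[OF k g(2,3)])
  next
    have "(\<Sum>k<6. \<integral>t. indicator {..<b} t * ?X k t \<partial>D)
        = (\<Sum>k<6. cond_pay_mass k (perm3_inv k 0) a b) + (\<Sum>k<6. cond_pay_mass k (perm3_inv k 1) a b)"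
      by (simp add: mass sum.distrib)
    also have "\<dots> = 6 * cond_revenue a b * measure D {..<b}"
      using cond_pay_mult_measure[of 0 a b] cond_pay_mult_measure[of 1 a b]
      by (simp add: cond_revenue_def algebra_simps)
    finally show "(\<Sum>k<6. \<integral>t. indicator {..<b} t * ?X k t \<partial>D)
        = card {..<6::nat} * cond_revenue a b * (\<integral>t. indicator {..<b} t \<partial>D)"
      by simp
  qed (auto simp: indicator_def)
  then show ?thesis by simp
qed

lemma sym_revenue_measurable: "sym_revenue \<in> borel_measurable M"
  unfolding sym_revenue_def[abs_def] by (intro borel_measurable_sum sym_pay_measurable) auto

lemma cond_revenue_measurable: "(\<lambda>z. cond_revenue (fst z) (snd z)) \<in> borel_measurable borel"
  unfolding cond_revenue_def using cond_pay_measurable[of 0] cond_pay_measurable[of 1] by simp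

context
  fixes g :: "real \<Rightarrow> real" and Bg :: real
  assumes g_measurable: "g \<in> borel_measurable borel"
    and g_bounded: "\<And>x. x \<in> {0..3 * vbar} \<Longrightarrow> \<bar>g x\<bar> \<le> Bg"
begin

lemma
  shows integral_sym_revenue: "(\<integral>v. g (sym_revenue v) \<partial>M)
      = (\<integral>v. 6 * (of_bool (v 1 < v 0) * (g (cond_revenue (v 0) (v 1)) * measure D {..<v 1})) \<partial>M)"
    and integrable_sym_revenue_desc:
      "integrable M (\<lambda>v. 6 * (of_bool (v 1 < v 0) * (g (cond_revenue (v 0) (v 1)) * measure D {..<v 1})))"
proof -
  define h where "h y = g (cond_revenue (y 0) (y 1))" for y :: "nat \<Rightarrow> real"
  have h: "h \<in> borel_measurable M" "\<bar>h y\<bar> \<le> Bg" for y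
    using measurable_comp[OF borel_measurable_uncurry_comp[OF cond_revenue_measurable
        measurable_coordinate[of 0] measurable_coordinate[of 1]] g_measurable] g_bounded[OF cond_revenue_range]
    by (simp_all add: h_def[abs_def] comp_def)
  have inner: "(\<integral>t. indicator {..<b} t * h (profile3 a b t) \<partial>D) = g (cond_revenue a b) * measure D {..<b}"
    for a b by (simp add: h_def integral_indicator_lessThan_mult)
  have "(\<integral>v. g (sym_revenue v) \<partial>M) = (\<Sum>k<6. \<integral>v. desc_ind v * g (sym_revenue (permute_profile k v)) \<partial>M)"
    using measurable_comp[OF sym_revenue_measurable g_measurable] g_bounded[OF sym_revenue_range]
    by (intro integral_decreasing_decomposition) (auto simp: comp_def)
  also have "\<dots> = 6 * (\<integral>v. desc_ind v * h v \<partial>M)"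
    by (simp add: sym_revenue_permute_profile h_def)
  finally show "(\<integral>v. g (sym_revenue v) \<partial>M)
      = (\<integral>v. 6 * (of_bool (v 1 < v 0) * (g (cond_revenue (v 0) (v 1)) * measure D {..<v 1})) \<partial>M)"
    by (simp add: integral_desc[OF h] inner)
  show "integrable M (\<lambda>v. 6 * (of_bool (v 1 < v 0) * (g (cond_revenue (v 0) (v 1)) * measure D {..<v 1})))"
    using integrable_desc[OF h] by (simp add: inner)
qed

lemma
  shows integral_pay_revenue: "(\<integral>v. g (pay_revenue v) \<partial>M) = (\<integral>v. of_bool (v 1 < v 0)
      * (\<Sum>k<6. \<integral>t. indicator {..<v 1} t * g (pay_revenue (permute_profile k (profile3 (v 0) (v 1) t))) \<partial>D) \<partial>M)"
    and integrable_pay_revenue_desc: "integrable M (\<lambda>v. of_bool (v 1 < v 0)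
      * (\<Sum>k<6. \<integral>t. indicator {..<v 1} t * g (pay_revenue (permute_profile k (profile3 (v 0) (v 1) t))) \<partial>D))"
proof -
  define h where "h y = (\<Sum>k<6. g (pay_revenue (permute_profile k y)))" for y :: "nat \<Rightarrow> real"
  have gp: "(\<lambda>v. g (pay_revenue (permute_profile k v))) \<in> borel_measurable M" if "k < 6" for k
    using measurable_comp[OF measurable_comp[OF permute_profile_measurable[OF that] pay_revenue_measurable]
        g_measurable]
    by (simp add: comp_def)
  have h: "h \<in> borel_measurable M" "\<bar>h y\<bar> \<le> 6 * Bg" for y
  proof -
    show "h \<in> borel_measurable M"
      unfolding h_def[abs_def] by (intro borel_measurable_sum gp) simp
    have "\<bar>h y\<bar> \<le> (\<Sum>k<6::nat. Bg)"
      unfolding h_def by (rule order_trans[OF sum_abs sum_mono]) (rule g_bounded[OF pay_revenue_range])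
    then show "\<bar>h y\<bar> \<le> 6 * Bg" by simp
  qed
  have inner: "(\<integral>t. indicator {..<b} t * h (profile3 a b t) \<partial>D)
      = (\<Sum>k<6. \<integral>t. indicator {..<b} t * g (pay_revenue (permute_profile k (profile3 a b t))) \<partial>D)" for a b
    unfolding h_def sum_distrib_left
    by (intro Bochner_Integration.integral_sum integrable_indicator_comp_pay_revenue[OF _ g_measurable g_bounded])
      simp_all
  have "(\<integral>v. g (pay_revenue v) \<partial>M) = (\<Sum>k<6. \<integral>v. desc_ind v * g (pay_revenue (permute_profile k v)) \<partial>M)"
    using measurable_comp[OF pay_revenue_measurable g_measurable] g_bounded[OF pay_revenue_range]
    by (intro integral_decreasing_decomposition) (auto simp: comp_def)
  also have "\<dots> = (\<integral>v. desc_ind v * h v \<partial>M)"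
    unfolding h_def sum_distrib_left
    using order_trans[OF abs_desc_ind_mult_le g_bounded[OF pay_revenue_range]]
    by (intro Bochner_Integration.integral_sum[symmetric] M.integrable_bounded_real[where B=Bg]
        borel_measurable_times desc_ind_measurable measurable_coordinate gp) auto
  finally show "(\<integral>v. g (pay_revenue v) \<partial>M) = (\<integral>v. of_bool (v 1 < v 0)
      * (\<Sum>k<6. \<integral>t. indicator {..<v 1} t * g (pay_revenue (permute_profile k (profile3 (v 0) (v 1) t))) \<partial>D) \<partial>M)"
    by (simp add: integral_desc[OF h] inner)
  show "integrable M (\<lambda>v. of_bool (v 1 < v 0)
      * (\<Sum>k<6. \<integral>t. indicator {..<v 1} t * g (pay_revenue (permute_profile k (profile3 (v 0) (v 1) t))) \<partial>D))"
    using integrable_desc[OF h] by (simp add: inner)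
qed

end

lemma sym_revenue_convex_le:
  fixes g :: "real \<Rightarrow> real"
  assumes g: "convex_on UNIV g"
  shows "(\<integral>v. g (sym_revenue v) \<partial>M) \<le> (\<integral>v. g (pay_revenue v) \<partial>M)"
proof -
  have gc: "continuous_on UNIV g" by (rule convex_on_continuous[OF open_UNIV g])
  then have gm: "g \<in> borel_measurable borel" by (rule borel_measurable_continuous_onI)
  obtain Bg where "\<And>x. x \<in> {0..3 * vbar} \<Longrightarrow> norm (g x) \<le> Bg"
    using continuous_on_compact_bound[OF compact_Icc continuous_on_subset[OF gc subset_UNIV]] by blast
  then have gb: "\<And>x. x \<in> {0..3 * vbar} \<Longrightarrow> \<bar>g x\<bar> \<le> Bg" by simp
  have "(\<integral>v. g (sym_revenue v) \<partial>M)
      = (\<integral>v. 6 * (of_bool (v 1 < v 0) * (g (cond_revenue (v 0) (v 1)) * measure D {..<v 1})) \<partial>M)"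
    by (rule integral_sym_revenue[OF gm gb])
  also have "\<dots> \<le> (\<integral>v. of_bool (v 1 < v 0) * (\<Sum>k<6. \<integral>t. indicator {..<v 1} t
      * g (pay_revenue (permute_profile k (profile3 (v 0) (v 1) t))) \<partial>D) \<partial>M)"
  proof (rule integral_mono[OF integrable_sym_revenue_desc[OF gm gb] integrable_pay_revenue_desc[OF gm gb]])
    show "6 * (of_bool (v 1 < v 0) * (g (cond_revenue (v 0) (v 1)) * measure D {..<v 1}))
      \<le> of_bool (v 1 < v 0) * (\<Sum>k<6. \<integral>t. indicator {..<v 1} t
          * g (pay_revenue (permute_profile k (profile3 (v 0) (v 1) t))) \<partial>D)" for v
      using cond_revenue_jensen[OF g gm gb, of "v 1" "v 0"] by (cases "v 1 < v 0") (simp_all add: mult_ac)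
  qed
  also have "\<dots> = (\<integral>v. g (pay_revenue v) \<partial>M)"
    by (rule integral_pay_revenue[OF gm gb, symmetric])
  finally show ?thesis .
qed

lemma sym_pay_convex_order:
  fixes g :: "real \<Rightarrow> real"
  assumes g: "convex_on UNIV g"
  shows "(\<integral>v. g (\<Sum>i\<in>bidders. sym_pay i v) \<partial>prof_measure f) \<le> (\<integral>v. g (\<Sum>i\<in>bidders. \<pi> i v) \<partial>prof_measure f)"
proof -
  have gm: "g \<in> borel_measurable borel"
    by (rule borel_measurable_continuous_onI[OF convex_on_continuous[OF open_UNIV g]])
  have "(\<integral>v. g (\<Sum>i\<in>bidders. \<pi> i v) \<partial>prof_measure f) = (\<integral>v. g (pay_revenue v) \<partial>M)"
  proof (simp add: prof_measure_eq bidders_def, rule integral_cong_AE)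
    show "(\<lambda>v. g (\<Sum>i<3. \<pi> i v)) \<in> borel_measurable M"
      using measurable_comp[OF borel_measurable_sum[of "{..<3}" \<pi>] gm] \<pi>_measurable by (simp add: comp_def)
    show "(\<lambda>v. g (pay_revenue v)) \<in> borel_measurable M"
      using measurable_comp[OF pay_revenue_measurable gm] by (simp add: comp_def)
    show "AE v in M. g (\<Sum>i<3. \<pi> i v) = g (pay_revenue v)"
      using AE_in_box by eventually_elim (simp add: pay_revenue_def pay_def)
  qed
  moreover have "(\<integral>v. g (\<Sum>i\<in>bidders. sym_pay i v) \<partial>prof_measure f) = (\<integral>v. g (sym_revenue v) \<partial>M)"
    by (simp add: prof_measure_eq bidders_def sym_revenue_def)
  ultimately show ?thesis
    using sym_revenue_convex_le[OF g] by simp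
qed

end

theorem mainTheorem16:
  fixes f :: "real \<Rightarrow> real" and vbar :: real
    and \<pi> :: "nat \<Rightarrow> (nat \<Rightarrow> real) \<Rightarrow> real"
  assumes vbar_pos: "vbar > 0"
    and f_meas: "f \<in> borel_measurable borel"
    and f_pos: "\<And>x. x \<in> {0..vbar} \<Longrightarrow> f x > 0"
    and f_zero: "\<And>x. x \<notin> {0..vbar} \<Longrightarrow> f x = 0"
    and f_prob: "prob_space (val_dist f)"
    and \<pi>_pay: "payment_rule f vbar \<pi>"
    and \<pi>_impl: "implements f vbar eff_alloc \<pi>"
    and \<pi>_IR: "ex_post_IR vbar eff_alloc \<pi>"
  shows "\<exists>P1 P2 :: real \<Rightarrow> real \<Rightarrow> real.
     (\<lambda>y. P1 (fst y) (snd y)) \<in> borel_measurable (restrict_space borel (tri vbar)) \<and>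
     (\<lambda>y. P2 (fst y) (snd y)) \<in> borel_measurable (restrict_space borel (tri vbar)) \<and>
     (\<forall>i\<in>bidders. \<forall>v\<in>box vbar. rank_pay P1 P2 i v \<ge> 0) \<and>
     ex_post_IR vbar eff_alloc (rank_pay P1 P2) \<and>
     (\<forall>i\<in>bidders. \<forall>w\<in>{0..vbar}.
        interim f (rank_pay P1 P2) i w = zfun f eff_alloc i w) \<and>
     (\<forall>g :: real \<Rightarrow> real. convex_on UNIV g \<longrightarrow>
        (\<integral>v. g (\<Sum>i\<in>bidders. rank_pay P1 P2 i v) \<partial>prof_measure f)
          \<le> (\<integral>v. g (\<Sum>i\<in>bidders. \<pi> i v) \<partial>prof_measure f)) \<and>
     prob_space.variance (prof_measure f) (\<lambda>v. \<Sum>i\<in>bidders. rank_pay P1 P2 i v)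
       \<le> prob_space.variance (prof_measure f) (\<lambda>v. \<Sum>i\<in>bidders. \<pi> i v)"
proof -
  interpret implementing_payment f vbar \<pi>
    by (intro implementing_payment.intro iid_values.intro implementing_payment_axioms.intro)
      (fact f_meas f_zero f_prob \<pi>_pay \<pi>_impl \<pi>_IR)+
  interpret N: prob_space "prof_measure f"
    by (simp add: prof_measure_eq M.prob_space_axioms)
  have cond_pay_tri_measurable: "(\<lambda>y. cond_pay m (fst y) (snd y)) \<in> borel_measurable (restrict_space borel (tri vbar))"
    if "m < 3" for m
    using that by (intro measurable_restrict_space1 cond_pay_measurable)
  show ?thesis
  proof (rule exI[of _ "cond_pay 0"], rule exI[of _ "cond_pay 1"], intro conjI ballI allI impI)
    show "0 \<le> sym_pay i v" for i v
      by (rule sym_pay_nonneg)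
    show "ex_post_IR vbar eff_alloc sym_pay"
      by (rule sym_pay_IR)
    show "interim f sym_pay i w = zfun f eff_alloc i w" if "i \<in> bidders" "w \<in> {0..vbar}" for i w
      using that by (intro interim_sym_pay) (simp_all add: bidders_def)
    show "(\<integral>v. g (\<Sum>i\<in>bidders. sym_pay i v) \<partial>prof_measure f)
        \<le> (\<integral>v. g (\<Sum>i\<in>bidders. \<pi> i v) \<partial>prof_measure f)" if "convex_on UNIV g" for g
      using that by (rule sym_pay_convex_order)
    show "prob_space.variance (prof_measure f) (\<lambda>v. \<Sum>i\<in>bidders. sym_pay i v)
       \<le> prob_space.variance (prof_measure f) (\<lambda>v. \<Sum>i\<in>bidders. \<pi> i v)"
      by (intro N.variance_le_of_convex_order sym_pay_convex_order)
  qed (simp_all add: cond_pay_tri_measurable)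
qed

end
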